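(* Consider the threshold delay system (the "TDE model") described in the context, with the quantities $N_{T1}$, $P_2^*$, $N_{T2}$, $N_1^*$, $P_1^*$ defined there. If $N_{T1}<N_T<N_{T2}$, then the equilibrium $E_1=(N_1^*,P_1^*,0)^T$ is asymptotically stable, in the following sense: for every $\varepsilon>0$ there is a neighbourhood $\mathcal{N}_\varepsilon$ of $E_1$ such that whenever $(\phi_1,\phi_2,\phi_3)\in D_{N_T}\cap\mathcal{N}_\varepsilon$, the solution $(N,P,Z)^T$ of the corresponding initial value problem satisfies $\|(N(t),P(t),Z(t))^T-E_1\|<\varepsilon$ for all $t\ge t_0$ and $\lim_{t\to\infty}(N(t),P(t),Z(t))^T=E_1$.
   Context: Standing assumptions: constants $\mu>\lambda>0$, $g>0$, $\gamma\in(0,1]$, $\delta>0$ with $\gamma g>\delta$, $\delta_0\ge 0$, $m>0$, $N_T>0$. The functions $f,h:[0,\infty)\to[0,\infty)$ are $C^1$ with $f(0)=0$, $f'>0$, $\lim_{N\to\infty}f(N)=1$ and $h(0)=0$, $h'>0$, $\lim_{P\to\infty}h(P)=1$. The function $R:[0,\infty)\to[0,\infty)$ is $C^1$ with $R\ge0$, $R'\ge0$, $R'(0)>0$ if $R(0)=0$, $\lim_{P\to\infty}R(P)=R_\infty<\infty$. For a function $P$ and $s\in[0,m]$, the delay $\tau(s,P_t)\ge0$ is defined implicitly by $\int_{-\tau(s,P_t)}^0 R(P(t+u))\,du=s$. TDE model, for $t\ge t_0$: $$N'(t)=-\mu P f(N)+\lambda P+\delta Z+(1-\gamma)gZh(P)+\delta_0(N_T-N-P-Z),$$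 $$P'(t)=\mu P f(N)-\lambda P-gZh(P),$$ $$Z'(t)=R(P(t))e^{-\delta_0\tau(m,P_t)}\frac{\gamma g Z(t-\tau(m,P_t))h(P(t-\tau(m,P_t)))}{R(P(t-\tau(m,P_t)))}-\delta Z(t),$$ with initial conditions $N(t_0+t)=\phi_1(t)$, $P(t_0+t)=\phi_2(t)$, $Z(t_0+t)=\phi_3(t)$ for $t\in[-t_0,0]$. $D_{N_T}$ is the set of triples $(\phi_1,\phi_2,\phi_3)$ of continuous functions on $[-t_0,0]$ (some $t_0>0$) with $\phi_i>0$, $\int_{-t_0}^0R(\phi_2(u))\,du=m$, and $$N_T=\phi_1(0)+\phi_2(0)+\phi_3(0)+\int_0^m e^{-\delta_0\tau(s,\phi_2)}\frac{\gamma g\,\phi_3(-\tau(s,\phi_2))h(\phi_2(-\tau(s,\phi_2)))}{R(\phi_2(-\tau(s,\phi_2)))}\,ds,$$ where $\tau(s,\phi_2)\in[0,t_0]$ solves $\int_{-\tau(s,\phi_2)}^0R(\phi_2(u))\,du=s$. Neighbourhoods of the constant triple $E_1$ are taken with respect to the sup norm of the initial functions. Define $N_{T1}=f^{-1}(\lambda/\mu)$, $N_1^*=N_{T1}$, $P_1^*=N_T-N_{T1}$. Let $P_2^*>0$ be the unique positive solution of $\gamma g\,e^{-\delta_0 m/R(P)}h(P)=\delta$ (it exists if $\delta_0=0$, or if $\delta_0>0$ and $m<R_\infty\ln(\gamma g/\delta)/\delta_0$; this is assumed), and $N_{T2}=N_{T1}+P_2^*$. *)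

theory Defs
  imports "HOL-Analysis.Analysis"
begin

definition tdelay :: "(real \<Rightarrow> real) \<Rightarrow> (real \<Rightarrow> real) \<Rightarrow> real \<Rightarrow> real \<Rightarrow> real \<Rightarrow> real" where
  "tdelay R p a t s = (THE T. T \<in> {0..t - a} \<and> integral {t - T..t} (\<lambda>u. R (p u)) = s)"

definition in_D :: "real \<Rightarrow> real \<Rightarrow> real \<Rightarrow> real \<Rightarrow> real \<Rightarrow> real \<Rightarrow>
    (real \<Rightarrow> real) \<Rightarrow> (real \<Rightarrow> real) \<Rightarrow>
    (real \<Rightarrow> real) \<Rightarrow> (real \<Rightarrow> real) \<Rightarrow> (real \<Rightarrow> real) \<Rightarrow> bool" where
  "in_D g gam del0 m NT t0 h R \<phi>1 \<phi>2 \<phi>3 \<longleftrightarrow>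
     t0 > 0 \<and>
     continuous_on {-t0..0} \<phi>1 \<and> continuous_on {-t0..0} \<phi>2 \<and> continuous_on {-t0..0} \<phi>3 \<and>
     (\<forall>t\<in>{-t0..0}. \<phi>1 t > 0 \<and> \<phi>2 t > 0 \<and> \<phi>3 t > 0) \<and>
     integral {-t0..0} (\<lambda>u. R (\<phi>2 u)) = m \<and>
     NT = \<phi>1 0 + \<phi>2 0 + \<phi>3 0 +
       integral {0..m} (\<lambda>s. let T = tdelay R \<phi>2 (-t0) 0 s in
          exp (- del0 * T) * gam * g * \<phi>3 (-T) * h (\<phi>2 (-T)) / R (\<phi>2 (-T)))"

definition tde_solution :: "real \<Rightarrow> real \<Rightarrow> real \<Rightarrow> real \<Rightarrow> real \<Rightarrow> real \<Rightarrow> real \<Rightarrow> real \<Rightarrow>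
    (real \<Rightarrow> real) \<Rightarrow> (real \<Rightarrow> real) \<Rightarrow> (real \<Rightarrow> real) \<Rightarrow> real \<Rightarrow>
    (real \<Rightarrow> real) \<Rightarrow> (real \<Rightarrow> real) \<Rightarrow> (real \<Rightarrow> real) \<Rightarrow>
    (real \<Rightarrow> real) \<Rightarrow> (real \<Rightarrow> real) \<Rightarrow> (real \<Rightarrow> real) \<Rightarrow> bool" where
  "tde_solution mu lam g gam del del0 m NT f h R t0 \<phi>1 \<phi>2 \<phi>3 N P Z \<longleftrightarrow>
     (\<forall>t\<in>{-t0..0}. N (t0 + t) = \<phi>1 t \<and> P (t0 + t) = \<phi>2 t \<and> Z (t0 + t) = \<phi>3 t) \<and>
     (\<forall>t\<ge>t0.
        (N has_real_derivative
           (- mu * P t * f (N t) + lam * P t + del * Z t + (1 - gam) * g * Z t * h (P t)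
            + del0 * (NT - N t - P t - Z t))) (at t within {t0..}) \<and>
        (P has_real_derivative
           (mu * P t * f (N t) - lam * P t - g * Z t * h (P t))) (at t within {t0..}) \<and>
        (Z has_real_derivative
           (let T = tdelay R P 0 t m in
              R (P t) * exp (- del0 * T) * (gam * g * Z (t - T) * h (P (t - T)) / R (P (t - T)))
              - del * Z t)) (at t within {t0..}))"

end

theory Submission
  imports Defs
begin

text \<open>
  Near \<open>E1\<close> the Z-equation is linear with a delay, \<open>Z' t = \<phi> t * Z (\<sigma> t) - \<delta> Z t\<close>, where
  \<open>\<sigma> t\<close> is the birth time of the juveniles maturing at t. Because \<open>P1 < P2\<close>, the coefficient
  \<open>\<phi>\<close> stays so far below \<open>\<delta>\<close> that \<open>r exp (- \<alpha> (t - t0))\<close> is a strict supersolution for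
  some \<open>\<alpha> > 0\<close>, and Z decays exponentially. The total mass \<open>N + P + Z + J\<close>, where J counts the
  juveniles still maturing, relaxes to \<open>N\<^sub>T\<close> and starts at \<open>N\<^sub>T\<close> by the normalisation built
  into \<open>D\<^sub>N\<^sub>T\<close>; so it is conserved. Eliminating N with it, \<open>P - P1\<close> satisfies a scalar
  equation with a restoring rate proportional to \<open>f'(N1) P1\<close>, forced by Z and J, hence decays
  too, and then so does \<open>N - N1\<close>. These estimates hold while the solution stays in a small
  neighbourhood of \<open>E1\<close> and keep it in half that neighbourhood, so by continuation it never
  leaves.
\<close>

section \<open>Monotonicity, comparison and continuation on the real line\<close>

lemma has_real_derivative_within_atLeast_imp_at:
  fixes F :: "real \<Rightarrow> real"
  assumes "(F has_real_derivative D) (at x within {a..})" "a < x"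
  shows "(F has_real_derivative D) (at x)"
proof -
  have "x \<in> interior {a..}" using assms(2) by simp
  then have "at x within {a..} = at x" by (rule at_within_interior)
  then show ?thesis using assms(1) by simp
qed

lemma has_real_derivative_within_imp_continuous_on:
  fixes F :: "real \<Rightarrow> real"
  assumes "\<forall>x\<in>S. \<exists>D. (F has_real_derivative D) (at x within S)"
  shows "continuous_on S F"
  unfolding continuous_on_eq_continuous_within
proof
  fix x assume "x \<in> S"
  then obtain D where "(F has_real_derivative D) (at x within S)" using assms by blast
  then show "continuous (at x within S) F" by (rule DERIV_continuous)
qed

lemma continuous_on_atLeast_if_has_real_derivative:
  fixes F F' :: "real \<Rightarrow> real"
  assumes "\<forall>x\<ge>a. (F has_real_derivative F' x) (at x within {a..})"
  shows "continuous_on {a..} F"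
  by (rule has_real_derivative_within_imp_continuous_on) (use assms in auto)

lemma pos_derivative_imp_strict_increasing:
  fixes F F' :: "real \<Rightarrow> real"
  assumes der: "\<forall>x\<ge>0. (F has_real_derivative F' x) (at x within {0..})" and pos: "\<forall>x\<ge>0. F' x > 0"
    and xy: "0 \<le> x" "x < y"
  shows "F x < F y"
proof (rule DERIV_pos_imp_increasing_open[OF xy(2)])
  fix z assume z: "x < z" "z < y"
  then have "(F has_real_derivative F' z) (at z)"
    using der xy by (intro has_real_derivative_within_atLeast_imp_at[where a=0]) auto
  then show "\<exists>d. (F has_real_derivative d) (at z) \<and> d > 0" using pos z xy by auto
next
  show "continuous_on {x..y} F"
    by (rule continuous_on_subset[OF continuous_on_atLeast_if_has_real_derivative[OF der]]) (use xy in auto)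
qed

lemma nonneg_derivative_imp_increasing:
  fixes F F' :: "real \<Rightarrow> real"
  assumes der: "\<forall>x\<ge>0. (F has_real_derivative F' x) (at x within {0..})" and nonneg: "\<forall>x\<ge>0. F' x \<ge> 0"
    and xy: "0 \<le> x" "x \<le> y"
  shows "F x \<le> F y"
proof (rule DERIV_nonneg_imp_increasing_open[OF xy(2)])
  fix z assume z: "x < z" "z < y"
  then have "(F has_real_derivative F' z) (at z)"
    using der xy by (intro has_real_derivative_within_atLeast_imp_at[where a=0]) auto
  then show "\<exists>d. (F has_real_derivative d) (at z) \<and> d \<ge> 0" using nonneg z xy by auto
next
  show "continuous_on {x..y} F"
    by (rule continuous_on_subset[OF continuous_on_atLeast_if_has_real_derivative[OF der]]) (use xy in auto)
qed

lemma pos_continuous_derivative_imp_uniform_slope: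
  fixes F F' :: "real \<Rightarrow> real"
  assumes der: "\<forall>x\<ge>0. (F has_real_derivative F' x) (at x within {0..})"
    and cont': "continuous_on {0..} F'" and pos: "\<forall>x\<ge>0. F' x > 0"
    and ab: "0 \<le> a" "a \<le> b"
  shows "\<exists>c>0. \<forall>y z. a \<le> y \<longrightarrow> y \<le> z \<longrightarrow> z \<le> b \<longrightarrow> c * (z - y) \<le> F z - F y"
proof -
  have "continuous_on {a..b} F'" by (rule continuous_on_subset[OF cont']) (use ab in auto)
  then obtain x0 where x0: "x0 \<in> {a..b}" "\<forall>y\<in>{a..b}. F' x0 \<le> F' y"
    using continuous_attains_inf[of "{a..b}" F'] ab by auto
  define c where "c = F' x0"
  have cpos: "c > 0" using pos x0 ab unfolding c_def by auto
  have contF: "continuous_on {0..} F" by (rule continuous_on_atLeast_if_has_real_derivative[OF der])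
  have "c * (z - y) \<le> F z - F y" if "a \<le> y" "y \<le> z" "z \<le> b" for y z
  proof -
    have "(\<lambda>x. F x - c * x) y \<le> (\<lambda>x. F x - c * x) z"
    proof (rule DERIV_nonneg_imp_increasing_open[OF \<open>y \<le> z\<close>])
      fix x assume x: "y < x" "x < z"
      have "(F has_real_derivative F' x) (at x)"
        using der x that ab by (intro has_real_derivative_within_atLeast_imp_at[where a=0]) auto
      then have "((\<lambda>x. F x - c * x) has_real_derivative F' x - c) (at x)"
        by (auto intro!: derivative_eq_intros)
      moreover have "F' x - c \<ge> 0" using x0 x that unfolding c_def by auto
      ultimately show "\<exists>y. ((\<lambda>x. F x - c * x) has_real_derivative y) (at x) \<and> 0 \<le> y" by blast
    next
      have "continuous_on {y..z} F" by (rule continuous_on_subset[OF contF]) (use that ab in auto)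
      then show "continuous_on {y..z} (\<lambda>x. F x - c * x)" by (auto intro!: continuous_intros)
    qed
    then show ?thesis by (simp add: algebra_simps)
  qed
  then show ?thesis using cpos by blast
qed

lemma first_crossing:
  fixes F :: "real \<Rightarrow> real"
  assumes cont: "continuous_on {t0..b} F" and F0: "F t0 < 0" and t: "t \<in> {t0..b}" and Ft: "F t \<ge> 0"
  shows "\<exists>ts\<in>{t0<..b}. F ts = 0 \<and> (\<forall>u\<in>{t0..<ts}. F u < 0)"
proof -
  define S where "S = {t0..b} \<inter> F -` {0..}"
  have clS: "closed S" unfolding S_def by (rule continuous_closed_preimage[OF cont]) auto
  have tS: "t \<in> S" unfolding S_def using t Ft by auto
  have bdd: "bdd_below S" unfolding S_def by (rule bdd_belowI[of _ t0]) auto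
  define ts where "ts = Inf S"
  have tsS: "ts \<in> S" unfolding ts_def using closed_contains_Inf[OF _ bdd clS] tS by auto
  have tsr: "t0 \<le> ts" "ts \<le> b" "F ts \<ge> 0" using tsS unfolding S_def by auto
  have below: "\<forall>u\<in>{t0..<ts}. F u < 0"
  proof
    fix u assume u: "u \<in> {t0..<ts}"
    show "F u < 0"
    proof (rule ccontr)
      assume "\<not> F u < 0"
      then have "u \<in> S" unfolding S_def using u tsr by auto
      then have "ts \<le> u" unfolding ts_def using bdd by (rule cInf_lower)
      then show False using u by simp
    qed
  qed
  have "t0 < ts" using tsr F0 by (cases "t0 = ts") auto
  have "continuous_on {t0..ts} F" by (rule continuous_on_subset[OF cont]) (use tsr in auto)
  then obtain x where x: "t0 \<le> x" "x \<le> ts" "F x = 0" using IVT'[of F t0 0 ts] F0 tsr by auto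
  have "x = ts"
  proof (rule ccontr)
    assume "x \<noteq> ts"
    then have "x \<in> {t0..<ts}" using x by auto
    then have "F x < 0" using below by blast
    then show False using x by simp
  qed
  then show ?thesis using \<open>t0 < ts\<close> tsr x below by auto
qed

lemma no_first_zero_with_neg_derivative:
  fixes D :: "real \<Rightarrow> real"
  assumes "t0 < ts" "D ts = 0" "\<forall>u\<in>{t0..<ts}. D u < 0"
    "(D has_real_derivative d) (at ts within {t0..})" "d < 0"
  shows False
proof -
  obtain e where e: "e > 0" "\<forall>h>0. ts - h \<in> {t0..} \<longrightarrow> h < e \<longrightarrow> D ts < D (ts - h)"
    using has_real_derivative_neg_dec_left[OF assms(4,5)] by blast
  define h where "h = min (e / 2) (ts - t0)"
  have h: "h > 0" "h < e" "ts - h \<in> {t0..}" "ts - h \<in> {t0..<ts}"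
    unfolding h_def using e assms(1) by auto
  have "D ts < D (ts - h)" using e h by blast
  moreover have "D (ts - h) < 0" using assms(3) h by blast
  ultimately show False using assms(2) by simp
qed

lemma abs_below_barrier:
  fixes X B :: "real \<Rightarrow> real"
  assumes cont: "continuous_on {t0..b} X" "continuous_on {t0..b} B" and start: "\<bar>X t0\<bar> < B t0"
    and upper: "\<And>ts. ts \<in> {t0<..b} \<Longrightarrow> X ts = B ts \<Longrightarrow> \<forall>u\<in>{t0..<ts}. \<bar>X u\<bar> < B u \<Longrightarrow>
        \<exists>d<0. ((\<lambda>u. X u - B u) has_real_derivative d) (at ts within {t0..})"
    and lower: "\<And>ts. ts \<in> {t0<..b} \<Longrightarrow> - X ts = B ts \<Longrightarrow> \<forall>u\<in>{t0..<ts}. \<bar>X u\<bar> < B u \<Longrightarrow>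
        \<exists>d<0. ((\<lambda>u. - X u - B u) has_real_derivative d) (at ts within {t0..})"
    and t: "t \<in> {t0..b}"
  shows "\<bar>X t\<bar> < B t"
proof (rule ccontr)
  assume "\<not> \<bar>X t\<bar> < B t"
  then have "\<bar>X t\<bar> - B t \<ge> 0" by simp
  moreover have "\<bar>X t0\<bar> - B t0 < 0" using start by simp
  moreover have "continuous_on {t0..b} (\<lambda>u. \<bar>X u\<bar> - B u)" using cont by (intro continuous_intros)
  ultimately obtain ts where ts: "ts \<in> {t0<..b}" "\<bar>X ts\<bar> - B ts = 0"
    and below': "\<forall>u\<in>{t0..<ts}. \<bar>X u\<bar> - B u < 0"
    using first_crossing[of t0 b "\<lambda>u. \<bar>X u\<bar> - B u" t] t by blast
  have below: "\<forall>u\<in>{t0..<ts}. \<bar>X u\<bar> < B u" using below' by simp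
  have "t0 < ts" using ts(1) by simp
  show False
  proof (cases "X ts \<ge> 0")
    case True
    then have "X ts = B ts" using ts(2) by simp
    then obtain d where d: "d < 0" "((\<lambda>u. X u - B u) has_real_derivative d) (at ts within {t0..})"
      using upper[OF ts(1) _ below] by blast
    have "\<forall>u\<in>{t0..<ts}. X u - B u < 0" using below by fastforce
    then show False using no_first_zero_with_neg_derivative[OF \<open>t0 < ts\<close> _ _ d(2) d(1)] \<open>X ts = B ts\<close>
      by simp
  next
    case False
    then have "- X ts = B ts" using ts(2) by simp
    then obtain d where d: "d < 0" "((\<lambda>u. - X u - B u) has_real_derivative d) (at ts within {t0..})"
      using lower[OF ts(1) _ below] by blast
    have "\<forall>u\<in>{t0..<ts}. - X u - B u < 0" using below by fastforce
    then show False using no_first_zero_with_neg_derivative[OF \<open>t0 < ts\<close> _ _ d(2) d(1)] \<open>- X ts = B ts\<close>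
      by simp
  qed
qed

lemma stays_below_by_continuation:
  fixes F :: "real \<Rightarrow> real"
  assumes cont: "\<And>b. continuous_on {t0..b} F" and start: "F t0 < \<eta>"
    and improve: "\<And>b t. \<forall>u\<in>{t0..b}. F u \<le> \<eta> \<Longrightarrow> t \<in> {t0..b} \<Longrightarrow> F t < \<eta>"
    and t: "t0 \<le> t"
  shows "F t < \<eta>"
proof (rule ccontr)
  assume "\<not> F t < \<eta>"
  then have "F t - \<eta> \<ge> 0" by simp
  moreover have "F t0 - \<eta> < 0" using start by simp
  moreover have "continuous_on {t0..t} (\<lambda>u. F u - \<eta>)" using cont by (intro continuous_intros)
  moreover have "t \<in> {t0..t}" using t by simp
  ultimately obtain ts where ts: "ts \<in> {t0<..t}" "F ts - \<eta> = 0" and below: "\<forall>u\<in>{t0..<ts}. F u - \<eta> < 0"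
    using first_crossing[of t0 t "\<lambda>u. F u - \<eta>" t] by blast
  have "F u \<le> \<eta>" if "u \<in> {t0..ts}" for u
  proof (cases "u = ts")
    case False
    then have "u \<in> {t0..<ts}" using that by auto
    then show ?thesis using below by fastforce
  qed (use ts(2) in simp)
  then have "F ts < \<eta>" using improve[of ts ts] ts(1) by auto
  then show False using ts(2) by simp
qed

lemma dist_triple_le_sum_abs:
  fixes a b c x y z :: real
  shows "dist (a, b, c) (x, y, z) \<le> \<bar>a - x\<bar> + \<bar>b - y\<bar> + \<bar>c - z\<bar>"
proof -
  have "dist (b, c) (y, z) \<le> \<bar>b - y\<bar> + \<bar>c - z\<bar>"
    unfolding dist_Pair_Pair dist_real_def using sqrt_sum_squares_le_sum_abs by simp
  moreover have "dist (a, b, c) (x, y, z) \<le> \<bar>a - x\<bar> + dist (b, c) (y, z)"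
    unfolding dist_Pair_Pair[of a "(b, c)"] using sqrt_sum_squares_le_sum_abs[of "dist a x" "dist (b, c) (y, z)"]
    by (simp add: dist_real_def)
  ultimately show ?thesis by simp
qed

lemma abs_less_of_dist_triple_less:
  fixes a b c x y z :: real
  assumes "dist (a, b, c) (x, y, z) < r"
  shows "\<bar>a - x\<bar> < r \<and> \<bar>b - y\<bar> < r \<and> \<bar>c - z\<bar> < r"
proof -
  have bc: "dist (b, c) (y, z) \<le> dist (a, b, c) (x, y, z)" using dist_snd_le[of "(a, b, c)" "(x, y, z)"] by simp
  have "\<bar>a - x\<bar> \<le> dist (a, b, c) (x, y, z)" using dist_fst_le[of "(a, b, c)" "(x, y, z)"] by (simp add: dist_real_def)
  moreover have "\<bar>b - y\<bar> \<le> dist (a, b, c) (x, y, z)" using dist_fst_le[of "(b, c)" "(y, z)"] bc by (simp add: dist_real_def)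
  moreover have "\<bar>c - z\<bar> \<le> dist (a, b, c) (x, y, z)" using dist_snd_le[of "(b, c)" "(y, z)"] bc by (simp add: dist_real_def)
  ultimately show ?thesis using assms by linarith
qed

lemma tendsto_of_exp_decay_bound:
  fixes X :: "real \<Rightarrow> real"
  assumes a: "a > 0" and bound: "\<forall>t\<ge>t0. \<bar>X t - L\<bar> \<le> K * exp (- a * (t - t0))"
  shows "(X \<longlongrightarrow> L) at_top"
proof -
  have "filterlim (\<lambda>t. a * (t - t0)) at_top at_top"
    unfolding filterlim_at_top
  proof
    fix M :: real
    show "eventually (\<lambda>t. M \<le> a * (t - t0)) at_top"
      unfolding eventually_at_top_linorder
    proof (rule exI[of _ "t0 + M / a"], intro allI impI)
      fix t assume "t0 + M / a \<le> t"
      then have "M / a \<le> t - t0" by simp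
      then show "M \<le> a * (t - t0)" using a by (simp add: pos_divide_le_eq mult.commute)
    qed
  qed
  then have "filterlim (\<lambda>t. - (a * (t - t0))) at_bot at_top" by (simp add: filterlim_uminus_at_bot)
  then have "((\<lambda>t. exp (- a * (t - t0))) \<longlongrightarrow> 0) at_top" by (simp add: filterlim_compose[OF exp_at_bot])
  then have "((\<lambda>t. K * exp (- a * (t - t0))) \<longlongrightarrow> 0) at_top" using tendsto_mult_right_zero by blast
  moreover have "eventually (\<lambda>t. norm (X t - L) \<le> K * exp (- a * (t - t0))) at_top"
    using bound by (intro eventually_at_top_linorderI[of t0]) simp
  ultimately have "((\<lambda>t. X t - L) \<longlongrightarrow> 0) at_top" by (rule Lim_null_comparison[rotated])
  then show ?thesis by (rule LIM_zero_cancel)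
qed

lemma ex1_level_of_strict_increasing:
  fixes F :: "real \<Rightarrow> real"
  assumes S: "is_interval S" and cont: "continuous_on S F"
    and mono: "\<And>x y. x \<in> S \<Longrightarrow> y \<in> S \<Longrightarrow> x < y \<Longrightarrow> F x < F y"
    and x0: "x0 \<in> S" "F x0 \<le> v" and x1: "x1 \<in> S" "v \<le> F x1"
  shows "\<exists>!x. x \<in> S \<and> F x = v"
proof (rule ex_ex1I)
  have "x0 \<le> x1"
  proof (rule ccontr)
    assume "\<not> x0 \<le> x1"
    then have "F x1 < F x0" using mono[OF x1(1) x0(1)] by simp
    then show False using x0(2) x1(2) by simp
  qed
  moreover have sub: "{x0..x1} \<subseteq> S"
  proof
    fix x assume "x \<in> {x0..x1}"
    then have "x0 \<le> x" "x \<le> x1" by auto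
    then show "x \<in> S" using S x0(1) x1(1) unfolding is_interval_1 by blast
  qed
  ultimately obtain x where x: "x0 \<le> x" "x \<le> x1" "F x = v"
    using IVT'[OF x0(2) x1(2) _ continuous_on_subset[OF cont sub]] by blast
  have "x \<in> S" using sub x(1,2) by auto
  then show "\<exists>x. x \<in> S \<and> F x = v" using x(3) by blast
next
  fix x y assume xy: "x \<in> S \<and> F x = v" "y \<in> S \<and> F y = v"
  show "x = y"
  proof (rule ccontr)
    assume "x \<noteq> y"
    then have "x < y \<or> y < x" by auto
    then show False using mono[of x y] mono[of y x] xy by auto
  qed
qed

lemma const_mult_length_le_integral:
  fixes F :: "real \<Rightarrow> real"
  assumes "continuous_on {x..y} F" "x \<le> y" "\<forall>u\<in>{x..y}. c \<le> F u"
  shows "c * (y - x) \<le> integral {x..y} F"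
proof -
  have "integral {x..y} (\<lambda>u. c) \<le> integral {x..y} F"
    by (rule integral_le) (use assms in \<open>auto intro: integrable_continuous_real\<close>)
  then show ?thesis using assms(2) by (simp add: mult.commute)
qed

lemma integral_le_const_mult_length:
  fixes F :: "real \<Rightarrow> real"
  assumes "continuous_on {x..y} F" "x \<le> y" "\<forall>u\<in>{x..y}. F u \<le> c"
  shows "integral {x..y} F \<le> c * (y - x)"
proof -
  have "integral {x..y} F \<le> integral {x..y} (\<lambda>u. c)"
    by (rule integral_le) (use assms in \<open>auto intro: integrable_continuous_real\<close>)
  then show ?thesis using assms(2) by (simp add: mult.commute)
qed

lemma indefinite_integral_has_real_derivative_at:
  fixes F :: "real \<Rightarrow> real"
  assumes "continuous_on {a..b} F" "x \<in> {a<..<b}"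
  shows "((\<lambda>t. integral {a..t} F) has_real_derivative F x) (at x)"
proof -
  have "at x within {a..b} = at x" using assms(2) by (intro at_within_interior) auto
  then show ?thesis using integral_has_real_derivative[OF assms(1), of x] assms(2) by auto
qed

lemma indefinite_integral_diff:
  fixes F :: "real \<Rightarrow> real"
  assumes "continuous_on {a..b} F" "a \<le> x" "x \<le> y" "y \<le> b"
  shows "integral {a..y} F - integral {a..x} F = integral {x..y} F"
proof -
  have "continuous_on {a..y} F" by (rule continuous_on_subset[OF assms(1)]) (use assms in auto)
  then have "F integrable_on {a..y}" by (rule integrable_continuous_real)
  from Henstock_Kurzweil_Integration.integral_combine[OF assms(2,3) this] show ?thesis by simp
qed

lemma exists_pos_rate_below:
  fixes k T d :: real
  assumes "k < d"
  shows "\<exists>\<alpha>>0. \<alpha> + k * exp (\<alpha> * T) < d"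
proof -
  have "((\<lambda>a. a + k * exp (a * T)) \<longlongrightarrow> 0 + k * exp (0 * T)) (at_right 0)"
    by (intro tendsto_intros tendsto_ident_at)
  then have "eventually (\<lambda>a. a + k * exp (a * T) < d) (at_right 0)"
    by (rule order_tendstoD(2)) (use assms in simp)
  then obtain a0 where a0: "a0 > 0" "\<forall>y>0. y < a0 \<longrightarrow> y + k * exp (y * T) < d"
    unfolding eventually_at_right_field by auto
  then have "a0 / 2 + k * exp (a0 / 2 * T) < d" by (intro a0(2)[rule_format]) auto
  then show ?thesis using a0(1) by (intro exI[of _ "a0 / 2"]) simp
qed

lemma tde_solution_continuous_on:
  assumes sol: "tde_solution mu lam g gam del del0 m NT f h R t0 \<phi>1 \<phi>2 \<phi>3 N P Z"
  shows "continuous_on {t0..b} N" "continuous_on {t0..b} P" "continuous_on {t0..b} Z"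
proof -
  have c: "continuous_on {t0..b} X"
    if d: "\<forall>t\<ge>t0. \<exists>D. (X has_real_derivative D) (at t within {t0..})" for X :: "real \<Rightarrow> real"
    unfolding continuous_on_eq_continuous_within
  proof
    fix t assume t: "t \<in> {t0..b}"
    then obtain D where "(X has_real_derivative D) (at t within {t0..})" using d by auto
    then have "continuous (at t within {t0..}) X" by (rule DERIV_continuous)
    then show "continuous (at t within {t0..b}) X" by (rule continuous_within_subset) auto
  qed
  have "\<forall>t\<ge>t0. \<exists>D. (N has_real_derivative D) (at t within {t0..})"
       "\<forall>t\<ge>t0. \<exists>D. (P has_real_derivative D) (at t within {t0..})"
       "\<forall>t\<ge>t0. \<exists>D. (Z has_real_derivative D) (at t within {t0..})"
    using sol unfolding tde_solution_def by blast+
  then show "continuous_on {t0..b} N" "continuous_on {t0..b} P" "continuous_on {t0..b} Z"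
    using c by blast+
qed

section \<open>The model near \<open>E1\<close>\<close>

text \<open>Per-capita recruitment of adult zooplankton when P is frozen at the value p;
  \<open>P2\<close> is its level \<open>\<delta>\<close>.\<close>
definition recruitment_rate ::
    "real \<Rightarrow> real \<Rightarrow> real \<Rightarrow> real \<Rightarrow> (real \<Rightarrow> real) \<Rightarrow> (real \<Rightarrow> real) \<Rightarrow> real \<Rightarrow> real" where
  "recruitment_rate gam g del0 m R h p = gam * g * exp (- del0 * m / R p) * h p"

locale tde_setting =
  fixes mu lam g gam del del0 m NT :: real
    and f h R f' :: "real \<Rightarrow> real" and N1 P1 :: real
  assumes mu_gt: "mu > lam" and lam_pos: "lam > 0" and g_pos: "g > 0" and gam_pos: "gam > 0"
    and del0_nn: "del0 \<ge> 0" and m_pos: "m > 0"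
    and f_der: "\<forall>x\<ge>0. (f has_real_derivative f' x) (at x within {0..})"
    and f'_cont: "continuous_on {0..} f'" and f'_pos: "\<forall>x\<ge>0. f' x > 0"
    and h_cont: "continuous_on {0..} h" and h_mono: "\<And>x y. 0 \<le> x \<Longrightarrow> x < y \<Longrightarrow> h x < h y"
    and h0: "h 0 = 0"
    and R_cont: "continuous_on {0..} R" and R_mono: "\<And>x y. 0 \<le> x \<Longrightarrow> x \<le> y \<Longrightarrow> R x \<le> R y"
    and R_pos: "\<And>x. x > 0 \<Longrightarrow> R x > 0"
    and N1_pos: "N1 > 0" and fN1: "f N1 = lam / mu" and P1_pos: "P1 > 0" and NT_eq: "NT = N1 + P1"
    and recruitment_P1: "recruitment_rate gam g del0 m R h P1 < del"
begin

lemma h_nonneg: "x \<ge> 0 \<Longrightarrow> h x \<ge> 0"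
  using h_mono[of 0 x] h0 by (cases "x = 0") auto

lemma h_mono_le: "0 \<le> x \<Longrightarrow> x \<le> y \<Longrightarrow> h x \<le> h y"
  using h_mono[of x y] by (cases "x = y") auto

lemma mu_pos: "mu > 0" using mu_gt lam_pos by simp

end

text \<open>The condition on \<open>\<alpha>\<close> is the quantitative form of \<open>P1 < P2\<close>: near \<open>E1\<close> the delayed
  recruitment of Z stays below its mortality \<open>\<delta>\<close>, with room for a decay rate \<open>\<alpha>\<close>.\<close>
locale tde_neighbourhood = tde_setting +
  fixes \<eta> \<alpha> c :: real
  assumes eta_pos: "\<eta> > 0" and eta_P1: "\<eta> < P1 / 2"
    and alpha_pos: "\<alpha> > 0"
    and alpha_cond: "\<alpha> + R (P1 + \<eta>) / R (P1 - \<eta>) * recruitment_rate gam g del0 m R h (P1 + \<eta>)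
        * exp (\<alpha> * (m / R (P1 - \<eta>))) < del"
    and c_pos: "c > 0"
    and slope: "\<forall>y z. N1 - \<eta> \<le> y \<longrightarrow> y \<le> z \<longrightarrow> z \<le> N1 + \<eta> \<longrightarrow> c * (z - y) \<le> f z - f y"
begin

definition "R_lo = R (P1 - \<eta>)"
definition "R_hi = R (P1 + \<eta>)"
definition "h_hi = h (P1 + \<eta>)"

text \<open>Bound for the coefficient of the delayed term in the Z-equation.\<close>
definition "feedback_max = R_hi / R_lo * recruitment_rate gam g del0 m R h (P1 + \<eta>)"

text \<open>The maturation speed is at least \<open>R_lo\<close>, so maturation takes at most this long.\<close>
definition "delay_max = m / R_lo"

definition "C_I = delay_max * gam * g * h_hi * exp (\<alpha> * delay_max)"

text \<open>Decay rate of \<open>P - P1\<close> once N has been eliminated through the conservation law.\<close>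
definition "restoring_rate = (P1 - \<eta>) * mu * c / 2"

definition "P_rate = min \<alpha> (restoring_rate / 4)"
definition "C_P = 1 + 2 * (1 + C_I) + 2 * g * h_hi / restoring_rate"
definition "C_total = C_P + C_I + 2"
definition "init_radius = \<eta> / (2 * C_total)"

lemma R_lo_pos: "R_lo > 0" unfolding R_lo_def using eta_P1 eta_pos by (intro R_pos) auto
lemma R_hi_pos: "R_hi > 0" unfolding R_hi_def using eta_P1 eta_pos P1_pos by (intro R_pos) auto
lemma h_hi_pos: "h_hi > 0" unfolding h_hi_def using h_mono[of 0 "P1 + \<eta>"] h0 eta_pos P1_pos by auto
lemma feedback_max_nonneg: "feedback_max \<ge> 0"
  unfolding feedback_max_def recruitment_rate_def
  using R_lo_pos R_hi_pos h_hi_pos gam_pos g_pos by (simp add: h_hi_def)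
lemma rate_condition: "\<alpha> + feedback_max * exp (\<alpha> * delay_max) < del"
  using alpha_cond unfolding feedback_max_def delay_max_def R_lo_def R_hi_def by simp
lemma delay_max_pos: "delay_max > 0" unfolding delay_max_def using m_pos R_lo_pos by simp
lemma C_I_nonneg: "C_I \<ge> 0" unfolding C_I_def using delay_max_pos gam_pos g_pos h_hi_pos by auto
lemma restoring_rate_pos: "restoring_rate > 0"
  unfolding restoring_rate_def using eta_P1 mu_pos c_pos P1_pos by auto
lemma P_rate_pos: "P_rate > 0" unfolding P_rate_def using restoring_rate_pos alpha_pos by auto
lemma P_rate_le: "P_rate \<le> \<alpha>" "P_rate \<le> restoring_rate / 4" unfolding P_rate_def by auto
lemma C_P_ge: "C_P \<ge> 1 + 2 * (1 + C_I)" "C_P \<ge> 2 * g * h_hi / restoring_rate"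
  unfolding C_P_def using C_I_nonneg restoring_rate_pos g_pos h_hi_pos by auto
lemma C_total_ge: "C_total \<ge> 2" unfolding C_total_def using C_P_ge C_I_nonneg by auto
lemma Z_barrier_margin: "E > 0 \<Longrightarrow> (\<alpha> + feedback_max * exp (\<alpha> * delay_max) - del) * E < 0"
  using rate_condition by (intro mult_neg_pos) auto

lemma P_barrier_margin: "E > 0 \<Longrightarrow> - restoring_rate * E + restoring_rate / 2 * E + P_rate * E < 0"
proof -
  assume "E > 0"
  then have "P_rate * E \<le> restoring_rate / 4 * E" using P_rate_le(2) by (intro mult_right_mono) auto
  moreover have "restoring_rate * E > 0" using restoring_rate_pos \<open>E > 0\<close> by simp
  ultimately show ?thesis by linarith
qed

lemma init_radius_pos: "init_radius > 0" unfolding init_radius_def using eta_pos C_total_ge by simp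
lemma init_radius_le: "init_radius \<le> \<eta> / 4"
proof -
  have "\<eta> / (2 * C_total) \<le> \<eta> / (2 * 2)" by (rule divide_left_mono) (use eta_pos C_total_ge in auto)
  then show ?thesis unfolding init_radius_def by simp
qed

end

text \<open>The estimates for a solution are first proved under the a priori assumption that it stays
  in the \<open>\<eta>\<close>-neighbourhood of \<open>E1\<close> up to time b; the assumption is removed by
  continuation in \<open>solution_rates\<close>.\<close>
locale tde_trajectory = tde_neighbourhood +
  fixes t0 r b :: real and \<phi>1 \<phi>2 \<phi>3 N P Z :: "real \<Rightarrow> real"
  assumes inD: "in_D g gam del0 m NT t0 h R \<phi>1 \<phi>2 \<phi>3"
    and sol: "tde_solution mu lam g gam del del0 m NT f h R t0 \<phi>1 \<phi>2 \<phi>3 N P Z"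
    and init: "\<forall>t\<in>{-t0..0}. \<bar>\<phi>1 t - N1\<bar> < r \<and> \<bar>\<phi>2 t - P1\<bar> < r \<and> \<bar>\<phi>3 t\<bar> < r"
    and r_pos: "0 < r" and r_le: "r \<le> \<eta>"
    and b_ge: "t0 \<le> b"
    and ball: "\<forall>t\<in>{t0..b}. \<bar>N t - N1\<bar> \<le> \<eta> \<and> \<bar>P t - P1\<bar> \<le> \<eta> \<and> \<bar>Z t\<bar> \<le> \<eta>"
begin

lemma t0_pos: "t0 > 0" using inD unfolding in_D_def by auto
lemma b_pos: "b > 0" using t0_pos b_ge by simp
lemma initial_data_cont: "continuous_on {-t0..0} \<phi>1" "continuous_on {-t0..0} \<phi>2" "continuous_on {-t0..0} \<phi>3"
  using inD unfolding in_D_def by auto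
lemma initial_maturation: "integral {-t0..0} (\<lambda>u. R (\<phi>2 u)) = m" using inD unfolding in_D_def by auto
lemma initial_total: "NT = \<phi>1 0 + \<phi>2 0 + \<phi>3 0 +
       integral {0..m} (\<lambda>s. let T = tdelay R \<phi>2 (-t0) 0 s in
          exp (- del0 * T) * gam * g * \<phi>3 (-T) * h (\<phi>2 (-T)) / R (\<phi>2 (-T)))"
  using inD unfolding in_D_def by auto

lemma initial_segment: "u \<in> {0..t0} \<Longrightarrow> N u = \<phi>1 (u - t0) \<and> P u = \<phi>2 (u - t0) \<and> Z u = \<phi>3 (u - t0)"
proof -
  assume u: "u \<in> {0..t0}"
  have "\<forall>t\<in>{-t0..0}. N (t0 + t) = \<phi>1 t \<and> P (t0 + t) = \<phi>2 t \<and> Z (t0 + t) = \<phi>3 t"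
    using sol unfolding tde_solution_def by blast
  from bspec[OF this, of "u - t0"] u show ?thesis by auto
qed

lemma N_der_sol: "t \<ge> t0 \<Longrightarrow> (N has_real_derivative
           (- mu * P t * f (N t) + lam * P t + del * Z t + (1 - gam) * g * Z t * h (P t)
            + del0 * (NT - N t - P t - Z t))) (at t within {t0..})"
  using sol unfolding tde_solution_def by blast
lemma P_der_sol: "t \<ge> t0 \<Longrightarrow> (P has_real_derivative
           (mu * P t * f (N t) - lam * P t - g * Z t * h (P t))) (at t within {t0..})"
  using sol unfolding tde_solution_def by blast
lemma Z_der_sol: "t \<ge> t0 \<Longrightarrow> (Z has_real_derivative
           (let T = tdelay R P 0 t m in
              R (P t) * exp (- del0 * T) * (gam * g * Z (t - T) * h (P (t - T)) / R (P (t - T)))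
              - del * Z t)) (at t within {t0..})"
  using sol unfolding tde_solution_def by blast

lemma continuous_on_from_initial_data:
  assumes eq: "\<forall>u\<in>{0..t0}. X u = \<psi> (u - t0)" and "continuous_on {-t0..0} \<psi>"
    and "continuous_on {t0..b} X"
  shows "continuous_on {0..b} X"
proof -
  have "continuous_on {0..t0} (\<lambda>u. \<psi> (u - t0))"
    by (rule continuous_on_compose2[OF assms(2)]) (auto intro!: continuous_intros)
  then have "continuous_on {0..t0} X" using continuous_on_cong[of "{0..t0}" "{0..t0}" X] eq by auto
  moreover have "{0..b} = {0..t0} \<union> {t0..b}" using t0_pos b_ge by auto
  ultimately show ?thesis using continuous_on_closed_Un[of "{0..t0}" "{t0..b}" X] assms(3) by simp
qed

lemma N_cont: "continuous_on {0..b} N"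
  using initial_segment initial_data_cont tde_solution_continuous_on[OF sol] by (intro continuous_on_from_initial_data[of N \<phi>1]) auto
lemma P_cont: "continuous_on {0..b} P"
  using initial_segment initial_data_cont tde_solution_continuous_on[OF sol] by (intro continuous_on_from_initial_data[of P \<phi>2]) auto
lemma Z_cont: "continuous_on {0..b} Z"
  using initial_segment initial_data_cont tde_solution_continuous_on[OF sol] by (intro continuous_on_from_initial_data[of Z \<phi>3]) auto

lemma P_ball: "u \<in> {0..b} \<Longrightarrow> \<bar>P u - P1\<bar> \<le> \<eta>"
proof (cases "u \<le> t0")
  case True
  assume u: "u \<in> {0..b}"
  then have "P u = \<phi>2 (u - t0)" using initial_segment True by auto
  moreover have "\<bar>\<phi>2 (u - t0) - P1\<bar> < r" using init u True by auto
  ultimately show ?thesis using r_le by simp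
next
  case False
  assume u: "u \<in> {0..b}"
  then show ?thesis using ball False by auto
qed

lemma P_lo: "u \<in> {0..b} \<Longrightarrow> P u \<ge> P1 - \<eta>" using P_ball[of u] by auto
lemma P_hi: "u \<in> {0..b} \<Longrightarrow> P u \<le> P1 + \<eta>" using P_ball[of u] by auto
lemma P_pos: "u \<in> {0..b} \<Longrightarrow> P u > 0" using P_lo[of u] eta_P1 eta_pos P1_pos by auto
lemma RP_lo: "u \<in> {0..b} \<Longrightarrow> R (P u) \<ge> R_lo"
  unfolding R_lo_def using P_lo[of u] eta_P1 eta_pos P1_pos by (intro R_mono) auto
lemma RP_hi: "u \<in> {0..b} \<Longrightarrow> R (P u) \<le> R_hi"
  unfolding R_hi_def using P_hi[of u] P_pos[of u] by (intro R_mono) auto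
lemma RP_pos: "u \<in> {0..b} \<Longrightarrow> R (P u) > 0" using RP_lo[of u] R_lo_pos by simp
lemma hP_nonneg: "u \<in> {0..b} \<Longrightarrow> h (P u) \<ge> 0" using P_pos[of u] by (intro h_nonneg) simp
lemma hP_hi: "u \<in> {0..b} \<Longrightarrow> h (P u) \<le> h_hi"
  unfolding h_hi_def using P_hi[of u] P_pos[of u] by (intro h_mono_le) auto

lemma P_img: "P ` {0..b} \<subseteq> {0..}" using P_pos by force
lemma RP_cont: "continuous_on {0..b} (\<lambda>u. R (P u))"
  by (rule continuous_on_compose2[OF R_cont P_cont P_img])
lemma hP_cont: "continuous_on {0..b} (\<lambda>u. h (P u))"
  by (rule continuous_on_compose2[OF h_cont P_cont P_img])

subsection \<open>The maturation delay\<close>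

text \<open>Cumulative maturation: a juvenile born at s matures at the time t with
  \<open>Rint t - Rint s = m\<close>.\<close>
definition "Rint t = integral {0..t} (\<lambda>u. R (P u))"

lemma Rint_der: "t \<in> {0..b} \<Longrightarrow> (Rint has_real_derivative R (P t)) (at t within {0..b})"
  unfolding Rint_def[abs_def] by (rule integral_has_real_derivative[OF RP_cont])
lemma Rint_der_at: "t \<in> {0<..<b} \<Longrightarrow> (Rint has_real_derivative R (P t)) (at t)"
  unfolding Rint_def[abs_def] by (rule indefinite_integral_has_real_derivative_at[OF RP_cont])
lemma Rint_cont: "continuous_on {0..b} Rint"
  unfolding Rint_def[abs_def] by (rule indefinite_integral_continuous_1[OF integrable_continuous_real[OF RP_cont]])
lemma Rint_diff: "0 \<le> x \<Longrightarrow> x \<le> y \<Longrightarrow> y \<le> b \<Longrightarrow> Rint y - Rint x = integral {x..y} (\<lambda>u. R (P u))"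
  unfolding Rint_def by (rule indefinite_integral_diff[OF RP_cont])

lemma Rint_bounds: "0 \<le> x \<Longrightarrow> x \<le> y \<Longrightarrow> y \<le> b \<Longrightarrow>
    R_lo * (y - x) \<le> Rint y - Rint x \<and> Rint y - Rint x \<le> R_hi * (y - x)"
proof -
  assume xy: "0 \<le> x" "x \<le> y" "y \<le> b"
  have c: "continuous_on {x..y} (\<lambda>u. R (P u))" by (rule continuous_on_subset[OF RP_cont]) (use xy in auto)
  show ?thesis unfolding Rint_diff[OF xy]
    using const_mult_length_le_integral[OF c xy(2), of R_lo] integral_le_const_mult_length[OF c xy(2), of R_hi]
      RP_lo RP_hi xy by auto
qed

lemma Rint_strict: "0 \<le> x \<Longrightarrow> x < y \<Longrightarrow> y \<le> b \<Longrightarrow> Rint x < Rint y"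
  using Rint_bounds[of x y] R_lo_pos by (smt (verit) mult_pos_pos)

lemma Rint_mono: "0 \<le> x \<Longrightarrow> x \<le> y \<Longrightarrow> y \<le> b \<Longrightarrow> Rint x \<le> Rint y"
  using Rint_strict[of x y] by (cases "x = y") auto

lemma Rint_inj: "inj_on Rint {0..b}"
proof (rule inj_onI)
  fix x y assume xy: "x \<in> {0..b}" "y \<in> {0..b}" "Rint x = Rint y"
  show "x = y"
  proof (rule ccontr)
    assume "x \<noteq> y"
    then have "x < y \<or> y < x" by auto
    then show False using Rint_strict[of x y] Rint_strict[of y x] xy by auto
  qed
qed

lemma Rint_0: "Rint 0 = 0" unfolding Rint_def by simp

lemma integral_R_P_shift:
  assumes "0 \<le> x" "x \<le> y" "y \<le> t0"
  shows "integral {x..y} (\<lambda>u. R (P u)) = integral {x - t0..y - t0} (\<lambda>u. R (\<phi>2 u))"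
proof -
  have "integral {x..y} (\<lambda>u. R (P u)) = integral {x..y} (\<lambda>u. R (\<phi>2 (u + - t0)))"
    by (rule integral_cong) (use initial_segment assms in auto)
  also have "\<dots> = integral {x - t0..y - t0} (\<lambda>u. R (\<phi>2 u))"
    using integral_shift_real_ivl[where f="\<lambda>u. R (\<phi>2 u)" and a="x - t0" and c="-t0" and b="y - t0"] by simp
  finally show ?thesis .
qed

lemma Rint_t0: "Rint t0 = m"
  using integral_R_P_shift[of 0 t0] t0_pos initial_maturation unfolding Rint_def by simp

lemma Rint_image: "Rint ` {0..b} = {0..Rint b}"
proof
  show "Rint ` {0..b} \<subseteq> {0..Rint b}" using Rint_mono Rint_0 by (force intro: Rint_mono)
next
  show "{0..Rint b} \<subseteq> Rint ` {0..b}"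
  proof
    fix y assume y: "y \<in> {0..Rint b}"
    then obtain x where "0 \<le> x" "x \<le> b" "Rint x = y"
      using IVT'[of Rint 0 y b] Rint_0 Rint_cont b_pos by auto
    then show "y \<in> Rint ` {0..b}" by auto
  qed
qed

definition "Rint_inv = the_inv_into {0..b} Rint"

lemma Rint_inv_props: "y \<in> {0..Rint b} \<Longrightarrow> Rint_inv y \<in> {0..b} \<and> Rint (Rint_inv y) = y"
  unfolding Rint_inv_def using Rint_inj Rint_image
  by (metis f_the_inv_into_f the_inv_into_into order_refl)

lemma Rint_inv_Rint: "x \<in> {0..b} \<Longrightarrow> Rint_inv (Rint x) = x"
  unfolding Rint_inv_def using Rint_inj by (rule the_inv_into_f_f)

lemma Rint_inv_cont: "continuous_on {0..Rint b} Rint_inv"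
proof -
  have "continuous_on (Rint ` {0..b}) Rint_inv"
    by (rule continuous_on_inv[OF Rint_cont compact_Icc]) (auto simp: Rint_inv_Rint)
  then show ?thesis using Rint_image by simp
qed

text \<open>The time at which the juveniles maturing at time t were born, i.e. \<open>t - \<tau>(m, P\<^sub>t)\<close>.\<close>
definition "entry_time t = Rint_inv (Rint t - m)"

lemma entry_arg_range: "t \<in> {t0..b} \<Longrightarrow> Rint t - m \<in> {0..Rint b}"
  using Rint_mono[of t0 t] Rint_mono[of t b] Rint_t0 t0_pos m_pos by auto

lemma entry_time_props: "t \<in> {t0..b} \<Longrightarrow> entry_time t \<in> {0..b} \<and> Rint (entry_time t) = Rint t - m"
  unfolding entry_time_def using Rint_inv_props entry_arg_range by blast

lemma entry_time_less: "t \<in> {t0..b} \<Longrightarrow> entry_time t < t"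
proof (rule ccontr)
  assume t: "t \<in> {t0..b}" and "\<not> entry_time t < t"
  then have "Rint t \<le> Rint (entry_time t)" using entry_time_props[OF t] t0_pos by (intro Rint_mono) auto
  then show False using entry_time_props[OF t] m_pos by simp
qed

lemma delay_bounds: "t \<in> {t0..b} \<Longrightarrow> m / R_hi \<le> t - entry_time t \<and> t - entry_time t \<le> delay_max"
proof -
  assume t: "t \<in> {t0..b}"
  have s: "entry_time t \<in> {0..b}" "Rint (entry_time t) = Rint t - m" "entry_time t < t"
    using entry_time_props[OF t] entry_time_less[OF t] by auto
  have "R_lo * (t - entry_time t) \<le> m" "m \<le> R_hi * (t - entry_time t)"
    using Rint_bounds[of "entry_time t" t] s t by auto
  then show ?thesis unfolding delay_max_def using R_lo_pos R_hi_pos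
    by (auto simp: pos_divide_le_eq pos_le_divide_eq mult.commute)
qed

lemma entry_time_t0: "entry_time t0 = 0"
  unfolding entry_time_def using Rint_t0 Rint_0 Rint_inv_Rint[of 0] b_pos by simp

lemma entry_time_pos: "t \<in> {t0<..b} \<Longrightarrow> entry_time t > 0"
proof (rule ccontr)
  assume t: "t \<in> {t0<..b}" and "\<not> entry_time t > 0"
  then have "entry_time t = 0" using entry_time_props[of t] by auto
  then have "Rint t = m" using entry_time_props[of t] Rint_0 t by auto
  moreover have "Rint t0 < Rint t" using Rint_strict[of t0 t] t t0_pos by auto
  ultimately show False using Rint_t0 by simp
qed

lemma tdelay_eq: "t \<in> {t0..b} \<Longrightarrow> tdelay R P 0 t m = t - entry_time t"
  unfolding tdelay_def
proof (rule the_equality)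
  assume t: "t \<in> {t0..b}"
  have s: "entry_time t \<in> {0..b}" "Rint (entry_time t) = Rint t - m" "entry_time t < t"
    using entry_time_props[OF t] entry_time_less[OF t] by auto
  show "t - entry_time t \<in> {0..t - 0} \<and> integral {t - (t - entry_time t)..t} (\<lambda>u. R (P u)) = m"
    using s Rint_diff[of "entry_time t" t] t by auto
  fix T assume T: "T \<in> {0..t - 0} \<and> integral {t - T..t} (\<lambda>u. R (P u)) = m"
  then have "Rint t - Rint (t - T) = m" using Rint_diff[of "t - T" t] t by auto
  then have "Rint (t - T) = Rint (entry_time t)" using s by simp
  then have "t - T = entry_time t" by (rule inj_onD[OF Rint_inj]) (use s T t in auto)
  then show "T = t - entry_time t" by simp
qed

lemma entry_time_cont: "continuous_on {t0..b} entry_time"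
proof -
  have c: "continuous_on {t0..b} (\<lambda>t. Rint t - m)"
    using continuous_on_subset[OF Rint_cont, of "{t0..b}"] t0_pos by (auto intro!: continuous_intros)
  have "continuous_on {t0..b} (\<lambda>t. Rint_inv (Rint t - m))"
    by (rule continuous_on_compose2[OF Rint_inv_cont c]) (use entry_arg_range in auto)
  then show ?thesis unfolding entry_time_def[abs_def] .
qed

lemma entry_time_der:
  assumes t: "t \<in> {t0<..<b}"
  shows "(entry_time has_real_derivative R (P t) / R (P (entry_time t))) (at t)"
proof -
  have tt: "t \<in> {t0..b}" using t by auto
  define y0 where "y0 = Rint t - m"
  have s: "entry_time t \<in> {0..b}" "Rint (entry_time t) = Rint t - m" "entry_time t < t" "entry_time t > 0"
    using entry_time_props[OF tt] entry_time_less[OF tt] entry_time_pos[of t] t by auto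
  have ai: "Rint_inv y0 = entry_time t" unfolding y0_def entry_time_def by simp
  have y0r: "0 < y0" "y0 < Rint b"
    using Rint_strict[of 0 "entry_time t"] Rint_strict[of "entry_time t" b] s t Rint_0 unfolding y0_def by auto
  have d2: "(Rint_inv has_real_derivative inverse (R (P (Rint_inv y0)))) (at y0)"
  proof (rule DERIV_inverse_function[where f=Rint and a=0 and b="Rint b"])
    show "(Rint has_real_derivative R (P (Rint_inv y0))) (at (Rint_inv y0))"
      unfolding ai using s t by (intro Rint_der_at) auto
    show "R (P (Rint_inv y0)) \<noteq> 0" unfolding ai using RP_pos[of "entry_time t"] s by simp
    show "0 < y0" "y0 < Rint b" by (rule y0r(1), rule y0r(2))
    show "isCont Rint_inv y0"
      using Rint_inv_cont y0r by (intro continuous_on_interior[of "{0..Rint b}"]) auto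
    fix y :: real assume "0 < y" "y < Rint b"
    then show "Rint (Rint_inv y) = y" using Rint_inv_props[of y] by simp
  qed
  have tin: "t \<in> {0<..<b}" using t t0_pos by auto
  have d3: "((\<lambda>t. Rint t - m) has_real_derivative R (P t) - 0) (at t)"
    by (rule DERIV_diff[OF Rint_der_at[OF tin] DERIV_const])
  have "((\<lambda>t. Rint_inv (Rint t - m)) has_real_derivative inverse (R (P (Rint_inv y0))) * R (P t)) (at t)"
    using DERIV_chain2[OF d2[unfolded y0_def] d3] unfolding y0_def by simp
  moreover have "inverse (R (P (Rint_inv y0))) * R (P t) = R (P t) / R (P (entry_time t))"
    unfolding ai by (simp add: divide_inverse)
  ultimately show ?thesis unfolding entry_time_def[abs_def] by simp
qed

subsection \<open>Decay of Z\<close>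

definition "feedback t =
  R (P t) * exp (- del0 * (t - entry_time t)) * (gam * g * h (P (entry_time t)) / R (P (entry_time t)))"

lemma Z_der: "t \<in> {t0..b} \<Longrightarrow>
    (Z has_real_derivative (feedback t * Z (entry_time t) - del * Z t)) (at t within {t0..})"
proof -
  assume t: "t \<in> {t0..b}"
  have s: "entry_time t \<in> {0..b}" using entry_time_props[OF t] by auto
  have "R (P t) * exp (- del0 * (t - entry_time t)) *
      (gam * g * Z (entry_time t) * h (P (entry_time t)) / R (P (entry_time t)))
        = feedback t * Z (entry_time t)"
    unfolding feedback_def using RP_pos[OF s] by (simp add: field_simps)
  then show ?thesis using Z_der_sol[of t] tdelay_eq[OF t] t by (simp add: Let_def)
qed

lemma feedback_bounds: "t \<in> {t0..b} \<Longrightarrow> 0 \<le> feedback t \<and> feedback t \<le> feedback_max"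
proof -
  assume t: "t \<in> {t0..b}"
  define s where "s = entry_time t"
  have s: "s \<in> {0..b}" using entry_time_props[OF t] unfolding s_def by auto
  have tb: "t \<in> {0..b}" using t t0_pos by auto
  have r1: "R (P t) / R (P s) \<le> R_hi / R_lo"
    using RP_hi[OF tb] RP_lo[OF s] RP_pos[OF s] R_hi_pos R_lo_pos by (intro frac_le) auto
  have r1n: "R (P t) / R (P s) \<ge> 0" using RP_pos[OF s] RP_pos[OF tb] by simp
  have e1: "exp (- del0 * (t - s)) \<le> exp (- del0 * m / R_hi)"
    using mult_left_mono[OF conjunct1[OF delay_bounds[OF t]] del0_nn] unfolding s_def by simp
  have h1: "h (P s) \<le> h_hi" "h (P s) \<ge> 0" using hP_hi[OF s] hP_nonneg[OF s] by auto
  have gg: "gam * g > 0" using gam_pos g_pos by simp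
  have eq: "feedback t = (R (P t) / R (P s)) * (gam * g * exp (- del0 * (t - s)) * h (P s))"
    unfolding feedback_def s_def by (simp add: field_simps)
  have rest: "gam * g * exp (- del0 * (t - s)) * h (P s) \<le> gam * g * exp (- del0 * m / R_hi) * h_hi"
    using e1 h1 gg by (intro mult_mono mult_left_mono) auto
  have "feedback t \<le> (R_hi / R_lo) * (gam * g * exp (- del0 * m / R_hi) * h_hi)"
    unfolding eq by (rule mult_mono[OF r1 rest]) (use R_hi_pos R_lo_pos gg h1 in auto)
  moreover have "feedback t \<ge> 0" unfolding eq using h1 r1n gam_pos g_pos by (intro mult_nonneg_nonneg) auto
  ultimately show ?thesis unfolding feedback_max_def recruitment_rate_def R_hi_def h_hi_def by simp
qed

definition "Z_envelope t = r * exp (- \<alpha> * (t - t0))"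

lemma Z_envelope_pos: "Z_envelope t > 0" unfolding Z_envelope_def using r_pos by simp

lemma Z_initial_bound: "u \<in> {0..t0} \<Longrightarrow> \<bar>Z u\<bar> < Z_envelope u"
proof -
  assume u: "u \<in> {0..t0}"
  have "\<bar>Z u\<bar> < r" using initial_segment[OF u] init u by auto
  moreover have "exp (- \<alpha> * (u - t0)) \<ge> 1" using u alpha_pos by (simp add: mult_nonneg_nonpos)
  then have "r * 1 \<le> r * exp (- \<alpha> * (u - t0))" using r_pos by (intro mult_left_mono) auto
  ultimately show ?thesis unfolding Z_envelope_def by linarith
qed

lemma Z_envelope_shift: "s \<le> t \<Longrightarrow> t - s \<le> delay_max \<Longrightarrow> Z_envelope s \<le> Z_envelope t * exp (\<alpha> * delay_max)"
proof -
  assume st: "s \<le> t" "t - s \<le> delay_max"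
  have "Z_envelope s = Z_envelope t * exp (\<alpha> * (t - s))"
    unfolding Z_envelope_def by (simp add: algebra_simps flip: exp_add)
  also have "\<dots> \<le> Z_envelope t * exp (\<alpha> * delay_max)"
    using st alpha_pos Z_envelope_pos[of t] by (intro mult_left_mono) auto
  finally show ?thesis .
qed

lemma delayed_term_bound:
  assumes ts: "ts \<in> {t0..b}" and below: "\<forall>u\<in>{t0..<ts}. \<bar>Z u\<bar> < Z_envelope u"
  shows "\<bar>feedback ts * Z (entry_time ts)\<bar> \<le> feedback_max * exp (\<alpha> * delay_max) * Z_envelope ts"
proof -
  define s where "s = entry_time ts"
  have s: "s \<in> {0..b}" "s < ts" "ts - s \<le> delay_max"
    using entry_time_props[OF ts] entry_time_less[OF ts] delay_bounds[OF ts] unfolding s_def by auto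
  have "\<bar>Z s\<bar> \<le> Z_envelope s"
  proof (cases "s < t0")
    case True
    then show ?thesis using Z_initial_bound[of s] s by auto
  next
    case False
    then have "s \<in> {t0..<ts}" using s by auto
    then show ?thesis using below by fastforce
  qed
  also have "\<dots> \<le> Z_envelope ts * exp (\<alpha> * delay_max)" using Z_envelope_shift s by simp
  finally have Zs: "\<bar>Z s\<bar> \<le> Z_envelope ts * exp (\<alpha> * delay_max)" .
  have fb: "0 \<le> feedback ts" "feedback ts \<le> feedback_max" using feedback_bounds[OF ts] by auto
  have "\<bar>feedback ts * Z s\<bar> = feedback ts * \<bar>Z s\<bar>" using fb by (simp add: abs_mult)
  also have "\<dots> \<le> feedback_max * (Z_envelope ts * exp (\<alpha> * delay_max))"
    using fb Zs feedback_max_nonneg by (intro mult_mono) auto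
  finally show ?thesis unfolding s_def by (simp add: ac_simps)
qed

lemma Z_envelope_der: "(Z_envelope has_real_derivative - \<alpha> * Z_envelope t) (at t within {t0..})"
  unfolding Z_envelope_def by (auto intro!: derivative_eq_intros)

text \<open>The envelope is a strict supersolution of the delayed Z-equation.\<close>
lemma Z_decay:
  assumes t: "t \<in> {t0..b}"
  shows "\<bar>Z t\<bar> < Z_envelope t"
proof -
  note key = Z_barrier_margin[OF Z_envelope_pos]
  have delayed: "\<bar>feedback ts * Z (entry_time ts)\<bar> \<le> feedback_max * exp (\<alpha> * delay_max) * Z_envelope ts"
    if "ts \<in> {t0<..b}" "\<forall>u\<in>{t0..<ts}. \<bar>Z u\<bar> < Z_envelope u" for ts
    using delayed_term_bound that by simp
  have upper: "\<exists>d<0. ((\<lambda>u. Z u - Z_envelope u) has_real_derivative d) (at ts within {t0..})"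
    if ts: "ts \<in> {t0<..b}" "Z ts = Z_envelope ts" "\<forall>u\<in>{t0..<ts}. \<bar>Z u\<bar> < Z_envelope u" for ts
  proof -
    have "((\<lambda>u. Z u - Z_envelope u) has_real_derivative
        (feedback ts * Z (entry_time ts) - del * Z ts) - (- \<alpha> * Z_envelope ts)) (at ts within {t0..})"
      using ts(1) by (intro DERIV_diff Z_der Z_envelope_der) auto
    moreover have "(feedback ts * Z (entry_time ts) - del * Z ts) - (- \<alpha> * Z_envelope ts) < 0"
      using key[of ts] delayed[OF ts(1,3)] ts(2) by (simp add: algebra_simps abs_le_iff)
    ultimately show ?thesis by blast
  qed
  have lower: "\<exists>d<0. ((\<lambda>u. - Z u - Z_envelope u) has_real_derivative d) (at ts within {t0..})"
    if ts: "ts \<in> {t0<..b}" "- Z ts = Z_envelope ts" "\<forall>u\<in>{t0..<ts}. \<bar>Z u\<bar> < Z_envelope u" for ts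
  proof -
    have "((\<lambda>u. - Z u - Z_envelope u) has_real_derivative
        - (feedback ts * Z (entry_time ts) - del * Z ts) - (- \<alpha> * Z_envelope ts)) (at ts within {t0..})"
      using ts(1) by (intro DERIV_diff DERIV_minus Z_der Z_envelope_der) auto
    moreover have "- (feedback ts * Z (entry_time ts) - del * Z ts) - (- \<alpha> * Z_envelope ts) < 0"
    proof -
      have "Z ts = - Z_envelope ts" using ts(2) by linarith
      then show ?thesis using key[of ts] delayed[OF ts(1,3)] by (simp add: algebra_simps abs_le_iff)
    qed
    ultimately show ?thesis by blast
  qed
  have "continuous_on {t0..b} Z" using tde_solution_continuous_on[OF sol] by blast
  moreover have "continuous_on {t0..b} Z_envelope" unfolding Z_envelope_def[abs_def] by (intro continuous_intros)
  moreover have "\<bar>Z t0\<bar> < Z_envelope t0" using Z_initial_bound[of t0] t0_pos by simp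
  ultimately show ?thesis using abs_below_barrier[of t0 b Z Z_envelope, OF _ _ _ upper lower t] by blast
qed

lemma Z_bound: "u \<in> {0..b} \<Longrightarrow> \<bar>Z u\<bar> \<le> Z_envelope u"
  using Z_decay[of u] Z_initial_bound[of u] by (cases "u \<le> t0") auto

subsection \<open>Juveniles and the conservation law\<close>

definition "births u = gam * g * Z u * h (P u)"
definition "births_scaled u = exp (del0 * u) * births u"
definition "births_scaled_integral x = integral {0..x} births_scaled"

text \<open>Juveniles present at time t: those born during the maturation period ending at t,
  each having survived with probability \<open>exp (- \<delta>0 (t - u))\<close>.\<close>
definition "juveniles t = exp (- del0 * t) * (births_scaled_integral t - births_scaled_integral (entry_time t))"

lemma births_cont: "continuous_on {0..b} births"
  unfolding births_def[abs_def] using Z_cont hP_cont by (auto intro!: continuous_intros)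
lemma births_scaled_cont: "continuous_on {0..b} births_scaled"
  unfolding births_scaled_def[abs_def] using births_cont by (auto intro!: continuous_intros)
lemma births_scaled_integral_der:
  "x \<in> {0<..<b} \<Longrightarrow> (births_scaled_integral has_real_derivative births_scaled x) (at x)"
  unfolding births_scaled_integral_def[abs_def]
  by (rule indefinite_integral_has_real_derivative_at[OF births_scaled_cont])
lemma births_scaled_integral_cont: "continuous_on {0..b} births_scaled_integral"
  unfolding births_scaled_integral_def[abs_def]
  by (rule indefinite_integral_continuous_1[OF integrable_continuous_real[OF births_scaled_cont]])
lemma births_scaled_integral_diff: "0 \<le> x \<Longrightarrow> x \<le> y \<Longrightarrow> y \<le> b \<Longrightarrow>
    births_scaled_integral y - births_scaled_integral x = integral {x..y} births_scaled"
  unfolding births_scaled_integral_def by (rule indefinite_integral_diff[OF births_scaled_cont])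

lemma juveniles_cont: "continuous_on {t0..b} juveniles"
proof -
  have c1: "continuous_on {t0..b} births_scaled_integral"
    by (rule continuous_on_subset[OF births_scaled_integral_cont]) (use t0_pos in auto)
  have "entry_time ` {t0..b} \<subseteq> {0..b}" using entry_time_props by auto
  then have c2: "continuous_on {t0..b} (\<lambda>t. births_scaled_integral (entry_time t))"
    by (rule continuous_on_compose2[OF births_scaled_integral_cont entry_time_cont])
  show ?thesis unfolding juveniles_def[abs_def] using c1 c2 by (auto intro!: continuous_intros)
qed

lemma juveniles_der: "t \<in> {t0<..<b} \<Longrightarrow>
    (juveniles has_real_derivative (- del0 * juveniles t + births t - feedback t * Z (entry_time t))) (at t)"
proof -
  assume t: "t \<in> {t0<..<b}"
  define s where "s = entry_time t"
  have tt: "t \<in> {t0..b}" using t by auto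
  have s: "s \<in> {0..b}" "s < t" "s > 0"
    using entry_time_props[OF tt] entry_time_less[OF tt] entry_time_pos[of t] t unfolding s_def by auto
  have d1: "(births_scaled_integral has_real_derivative births_scaled t) (at t)"
    using t t0_pos by (intro births_scaled_integral_der) auto
  have d2: "((\<lambda>t. births_scaled_integral (entry_time t)) has_real_derivative
      births_scaled s * (R (P t) / R (P s))) (at t)"
    unfolding s_def by (rule DERIV_chain2[OF births_scaled_integral_der entry_time_der[OF t]])
      (use s t in \<open>auto simp: s_def\<close>)
  have dexp: "((\<lambda>t. exp (- del0 * t)) has_real_derivative exp (- del0 * t) * (- del0)) (at t)"
    by (auto intro!: derivative_eq_intros)
  have d3: "(juveniles has_real_derivative
      exp (- del0 * t) * (births_scaled t - births_scaled s * (R (P t) / R (P s)))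
      + (exp (- del0 * t) * (- del0)) * (births_scaled_integral t - births_scaled_integral s)) (at t)"
    unfolding juveniles_def[abs_def] s_def by (rule DERIV_mult'[OF dexp DERIV_diff[OF d1 d2[unfolded s_def]]])
  have e1: "exp (- del0 * t) * births_scaled t = births t"
    unfolding births_scaled_def by (simp add: mult_exp_exp flip: mult.assoc exp_add)
  have "exp (- del0 * t) * exp (del0 * s) = exp (- del0 * (t - s))"
    by (simp add: algebra_simps flip: exp_add)
  then have e2: "exp (- del0 * t) * (births_scaled s * (R (P t) / R (P s))) = feedback t * Z s"
    unfolding births_scaled_def births_def feedback_def s_def by (simp add: field_simps)
  have "exp (- del0 * t) * (births_scaled t - births_scaled s * (R (P t) / R (P s)))
      + (exp (- del0 * t) * (- del0)) * (births_scaled_integral t - births_scaled_integral s)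
      = - del0 * juveniles t + births t - feedback t * Z s"
    unfolding juveniles_def s_def[symmetric] using e1 e2 by (simp add: algebra_simps)
  then show ?thesis using d3 unfolding s_def by simp
qed

definition "total_mass t = N t + P t + Z t + juveniles t"

text \<open>The juveniles term exactly compensates the delayed maturation in the Z-equation, so
  only the natural mortality \<open>\<delta>0\<close> and the matching inflow act on the total mass.\<close>
lemma total_mass_der: "t \<in> {t0<..<b} \<Longrightarrow> (total_mass has_real_derivative del0 * (NT - total_mass t)) (at t)"
proof -
  assume t: "t \<in> {t0<..<b}"
  have tt: "t \<in> {t0..b}" "t \<ge> t0" "t > t0" using t by auto
  have "at t within {t0..} = at t" using tt(3) by (intro at_within_interior) auto
  then have d: "(total_mass has_real_derivative
     (- mu * P t * f (N t) + lam * P t + del * Z t + (1 - gam) * g * Z t * h (P t)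
            + del0 * (NT - N t - P t - Z t))
     + (mu * P t * f (N t) - lam * P t - g * Z t * h (P t))
     + (feedback t * Z (entry_time t) - del * Z t)
     + (- del0 * juveniles t + births t - feedback t * Z (entry_time t))) (at t)"
    unfolding total_mass_def[abs_def] using N_der_sol[OF tt(2)] P_der_sol[OF tt(2)] Z_der[OF tt(1)] juveniles_der[OF t]
    by (intro DERIV_add) auto
  show ?thesis by (rule DERIV_cong[OF d]) (simp add: births_def total_mass_def algebra_simps)
qed

lemma Rint_inv_le_t0: "y \<in> {0..m} \<Longrightarrow> Rint_inv y \<in> {0..t0}"
proof -
  assume y: "y \<in> {0..m}"
  have yy: "y \<in> {0..Rint b}" using y Rint_t0 Rint_mono[of t0 b] b_ge t0_pos by auto
  have ai: "Rint_inv y \<in> {0..b}" "Rint (Rint_inv y) = y" using Rint_inv_props[OF yy] by auto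
  have "Rint_inv y \<le> t0"
  proof (rule ccontr)
    assume "\<not> Rint_inv y \<le> t0"
    then have "Rint t0 < Rint (Rint_inv y)" using ai t0_pos by (intro Rint_strict) auto
    then show False using ai y Rint_t0 by auto
  qed
  then show ?thesis using ai by auto
qed

lemma tdelay_initial: "s \<in> {0..m} \<Longrightarrow> tdelay R \<phi>2 (-t0) 0 s = t0 - Rint_inv (m - s)"
  unfolding tdelay_def
proof (rule the_equality)
  assume s: "s \<in> {0..m}"
  define x where "x = Rint_inv (m - s)"
  have ms: "m - s \<in> {0..m}" "m - s \<in> {0..Rint b}" using s Rint_t0 Rint_mono[of t0 b] b_ge t0_pos by auto
  have x: "x \<in> {0..t0}" "Rint x = m - s" using Rint_inv_le_t0[OF ms(1)] Rint_inv_props[OF ms(2)] unfolding x_def by auto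
  have "integral {x..t0} (\<lambda>u. R (P u)) = s" using Rint_diff[of x t0] x b_ge Rint_t0 by auto
  then have "integral {x - t0..0} (\<lambda>u. R (\<phi>2 u)) = s" using integral_R_P_shift[of x t0] x by auto
  then show "t0 - Rint_inv (m - s) \<in> {0..0 - - t0} \<and>
      integral {0 - (t0 - Rint_inv (m - s))..0} (\<lambda>u. R (\<phi>2 u)) = s"
    using x unfolding x_def by auto
  fix T assume T: "T \<in> {0..0 - - t0} \<and> integral {0 - T..0} (\<lambda>u. R (\<phi>2 u)) = s"
  define y where "y = t0 - T"
  have yr: "y \<in> {0..t0}" using T unfolding y_def by auto
  have "integral {y..t0} (\<lambda>u. R (P u)) = s" using integral_R_P_shift[of y t0] yr T unfolding y_def by auto
  then have "Rint y = m - s" using Rint_diff[of y t0] yr b_ge Rint_t0 by auto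
  then have "Rint_inv (m - s) = y" using Rint_inv_Rint[of y] yr b_ge by auto
  then show "T = t0 - Rint_inv (m - s)" unfolding y_def by simp
qed

text \<open>The integrand of the normalisation in \<open>in_D\<close>, as a function of the maturity level s and
  as a function of the birth time u.\<close>
definition "initial_integrand s = (let T = tdelay R \<phi>2 (-t0) 0 s in
          exp (- del0 * T) * gam * g * \<phi>3 (-T) * h (\<phi>2 (-T)) / R (\<phi>2 (-T)))"
definition "initial_integrand_time u = exp (- del0 * (t0 - u)) * gam * g * Z u * h (P u) / R (P u)"

lemma initial_integrand_eq: "s \<in> {0..m} \<Longrightarrow> initial_integrand s = initial_integrand_time (Rint_inv (m - s))"
proof -
  assume s: "s \<in> {0..m}"
  define x where "x = Rint_inv (m - s)"
  have x: "x \<in> {0..t0}" using Rint_inv_le_t0[of "m - s"] s unfolding x_def by auto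
  have "initial_integrand s =
      exp (- del0 * (t0 - x)) * gam * g * \<phi>3 (x - t0) * h (\<phi>2 (x - t0)) / R (\<phi>2 (x - t0))"
    unfolding initial_integrand_def tdelay_initial[OF s] x_def[symmetric] by (simp add: Let_def)
  also have "\<dots> = initial_integrand_time x" unfolding initial_integrand_time_def using initial_segment[OF x] by simp
  finally show ?thesis unfolding x_def .
qed

lemma initial_integrand_cont: "continuous_on {0..m} initial_integrand"
proof -
  have sub: "{0..t0} \<subseteq> {0..b}" using b_ge by auto
  have "continuous_on {0..t0} Z" "continuous_on {0..t0} (\<lambda>u. h (P u))" "continuous_on {0..t0} (\<lambda>u. R (P u))"
    using continuous_on_subset[OF Z_cont sub] continuous_on_subset[OF hP_cont sub]
      continuous_on_subset[OF RP_cont sub] by auto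
  moreover have "\<forall>u\<in>{0..t0}. R (P u) \<noteq> 0" using RP_pos sub by force
  ultimately have c: "continuous_on {0..t0} initial_integrand_time"
    unfolding initial_integrand_time_def[abs_def] by (auto intro!: continuous_intros)
  have "m \<le> Rint b" using Rint_t0 Rint_mono[of t0 b] b_ge t0_pos by auto
  then have "continuous_on {0..m} (\<lambda>s. Rint_inv (m - s))"
    by (intro continuous_on_compose2[OF Rint_inv_cont]) (auto intro!: continuous_intros)
  then have "continuous_on {0..m} (\<lambda>s. initial_integrand_time (Rint_inv (m - s)))"
    by (rule continuous_on_compose2[OF c]) (use Rint_inv_le_t0 in force)
  then show ?thesis using continuous_on_cong[of "{0..m}" "{0..m}" initial_integrand] initial_integrand_eq by auto
qed

text \<open>Change of variables \<open>s = m - Rint u\<close>.\<close>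
lemma initial_integral_substitution:
  "((\<lambda>u. R (P u) * initial_integrand (m - Rint u)) has_integral integral {0..m} initial_integrand) {0..t0}"
proof -
  have sub: "{0..t0} \<subseteq> {0..b}" using b_ge by auto
  have img: "(\<lambda>u. m - Rint u) ` {0..t0} \<subseteq> {0..m}"
    using Rint_mono[of 0 _] Rint_mono[of _ t0] Rint_0 Rint_t0 b_ge by force
  have cg: "continuous_on {0..t0} (\<lambda>u. m - Rint u)"
    using continuous_on_subset[OF Rint_cont sub] by (auto intro!: continuous_intros)
  have dg: "((\<lambda>u. m - Rint u) has_real_derivative - R (P u)) (at u within {0..t0})" if u: "u \<in> {0..t0}" for u
  proof -
    have "(Rint has_real_derivative R (P u)) (at u within {0..t0})"
      using DERIV_subset[OF Rint_der sub] u sub by auto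
    from DERIV_diff[OF DERIV_const this] show ?thesis by simp
  qed
  have "((\<lambda>u. - R (P u) *\<^sub>R initial_integrand (m - Rint u)) has_integral
      (integral {m - Rint 0..m - Rint t0} initial_integrand - integral {m - Rint t0..m - Rint 0} initial_integrand)) {0..t0}"
    by (rule has_integral_substitution_general[of "{}" 0 t0 "\<lambda>u. m - Rint u" 0 m initial_integrand])
      (use t0_pos img initial_integrand_cont cg dg in auto)
  then have "((\<lambda>u. - R (P u) * initial_integrand (m - Rint u)) has_integral (- integral {0..m} initial_integrand)) {0..t0}"
    using Rint_0 Rint_t0 m_pos by simp
  from has_integral_neg[OF this] show ?thesis by simp
qed

lemma juveniles_t0: "juveniles t0 = integral {0..m} initial_integrand"
proof -
  have eq: "R (P u) * initial_integrand (m - Rint u) = exp (- del0 * t0) * births_scaled u"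
    if u: "u \<in> {0..t0}" for u
  proof -
    have u': "u \<in> {0..b}" using u b_ge by auto
    have "Rint u \<in> {0..m}" using Rint_mono[of 0 u] Rint_mono[of u t0] Rint_0 Rint_t0 u b_ge by auto
    then have "initial_integrand (m - Rint u) = initial_integrand_time u"
      using initial_integrand_eq[of "m - Rint u"] Rint_inv_Rint[OF u'] by auto
    moreover have "exp (- del0 * t0) * exp (del0 * u) = exp (- del0 * (t0 - u))"
      by (simp add: algebra_simps flip: exp_add)
    ultimately show ?thesis
      using RP_pos[OF u'] unfolding initial_integrand_time_def births_scaled_def births_def by (simp add: field_simps)
  qed
  have "((\<lambda>u. exp (- del0 * t0) * births_scaled u) has_integral integral {0..m} initial_integrand) {0..t0}"
    by (rule iffD1[OF has_integral_cong[OF eq] initial_integral_substitution])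
  then have "integral {0..t0} (\<lambda>u. exp (- del0 * t0) * births_scaled u) = integral {0..m} initial_integrand"
    by (rule integral_unique)
  then have "exp (- del0 * t0) * births_scaled_integral t0 = integral {0..m} initial_integrand"
    unfolding births_scaled_integral_def by simp
  then show ?thesis unfolding juveniles_def using entry_time_t0 by (simp add: births_scaled_integral_def)
qed

lemma total_mass_t0: "total_mass t0 = NT"
proof -
  have "N t0 = \<phi>1 0" "P t0 = \<phi>2 0" "Z t0 = \<phi>3 0" using initial_segment[of t0] t0_pos by auto
  then show ?thesis unfolding total_mass_def juveniles_t0 initial_total initial_integrand_def[abs_def] by simp
qed

text \<open>Conservation law: \<open>exp (\<delta>0 t) (total_mass t - NT)\<close> has derivative zero and vanishes at \<open>t0\<close>.\<close>
lemma total_mass_const: "t \<in> {t0..b} \<Longrightarrow> total_mass t = NT"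
proof -
  assume t: "t \<in> {t0..b}"
  define U where "U t = exp (del0 * t) * (total_mass t - NT)" for t
  have sub: "{t0..b} \<subseteq> {0..b}" using t0_pos by auto
  have "continuous_on {t0..b} total_mass" unfolding total_mass_def[abs_def]
    using continuous_on_subset[OF N_cont sub] continuous_on_subset[OF P_cont sub]
      continuous_on_subset[OF Z_cont sub] juveniles_cont by (auto intro!: continuous_intros)
  then have cU: "continuous_on {t0..b} U" unfolding U_def[abs_def] by (auto intro!: continuous_intros)
  have dU: "(U has_real_derivative 0) (at x)" if x: "t0 < x" "x < b" for x
  proof -
    have dexp: "((\<lambda>t. exp (del0 * t)) has_real_derivative exp (del0 * x) * del0) (at x)"
      by (auto intro!: derivative_eq_intros)
    have dT: "((\<lambda>t. total_mass t - NT) has_real_derivative del0 * (NT - total_mass x) - 0) (at x)"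
      by (rule DERIV_diff[OF total_mass_der DERIV_const]) (use x in auto)
    have "(U has_real_derivative exp (del0 * x) * (del0 * (NT - total_mass x) - 0)
          + exp (del0 * x) * del0 * (total_mass x - NT)) (at x)"
      unfolding U_def[abs_def] by (rule DERIV_mult'[OF dexp dT])
    then show ?thesis by (rule DERIV_cong) (simp add: algebra_simps)
  qed
  have "U t = U t0"
  proof (cases "t0 < b")
    case True
    show ?thesis by (rule DERIV_isconst2[OF True cU dU]) (use t in auto)
  next
    case False
    then have "t = t0" using t by auto
    then show ?thesis by simp
  qed
  moreover have "U t0 = 0" unfolding U_def using total_mass_t0 by simp
  ultimately show ?thesis unfolding U_def by simp
qed

lemma births_scaled_bound:
  assumes t: "t \<in> {t0..b}" and u: "u \<in> {entry_time t..t}"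
  shows "\<bar>births_scaled u\<bar> \<le> exp (del0 * t) * (gam * g * h_hi * Z_envelope (entry_time t))"
proof -
  have s: "entry_time t \<in> {0..b}" using entry_time_props[OF t] by auto
  have ub: "u \<in> {0..b}" using u s t by auto
  have "\<bar>Z u\<bar> \<le> Z_envelope u" by (rule Z_bound[OF ub])
  also have "\<dots> \<le> Z_envelope (entry_time t)"
    unfolding Z_envelope_def using u alpha_pos r_pos by (intro mult_left_mono) auto
  finally have z: "\<bar>Z u\<bar> \<le> Z_envelope (entry_time t)" .
  have hh: "0 \<le> h (P u)" "h (P u) \<le> h_hi" using hP_nonneg[OF ub] hP_hi[OF ub] by auto
  have "\<bar>births u\<bar> = gam * g * h (P u) * \<bar>Z u\<bar>"
    unfolding births_def using hh gam_pos g_pos by (simp add: abs_mult)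
  also have "\<dots> \<le> gam * g * h_hi * Z_envelope (entry_time t)"
    using hh z gam_pos g_pos by (intro mult_mono) auto
  finally have wb: "\<bar>births u\<bar> \<le> gam * g * h_hi * Z_envelope (entry_time t)" .
  have "\<bar>births_scaled u\<bar> = exp (del0 * u) * \<bar>births u\<bar>" unfolding births_scaled_def by (simp add: abs_mult)
  also have "\<dots> \<le> exp (del0 * t) * (gam * g * h_hi * Z_envelope (entry_time t))"
    using wb u del0_nn by (intro mult_mono) (auto intro: mult_left_mono)
  finally show ?thesis .
qed

lemma juveniles_bound: "t \<in> {t0..b} \<Longrightarrow> \<bar>juveniles t\<bar> \<le> C_I * Z_envelope t"
proof -
  assume t: "t \<in> {t0..b}"
  define s where "s = entry_time t"
  have s: "s \<in> {0..b}" "s < t" "t - s \<le> delay_max"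
    using entry_time_props[OF t] entry_time_less[OF t] delay_bounds[OF t] unfolding s_def by auto
  define K where "K = gam * g * h_hi"
  have K: "K \<ge> 0" unfolding K_def using gam_pos g_pos h_hi_pos by simp
  have cE: "continuous_on {s..t} births_scaled"
    by (rule continuous_on_subset[OF births_scaled_cont]) (use s t in auto)
  have "\<bar>integral {s..t} births_scaled\<bar> \<le> exp (del0 * t) * (K * Z_envelope s) * (t - s)"
    using integral_bound[OF _ cE, of "exp (del0 * t) * (K * Z_envelope s)"] births_scaled_bound[OF t] s
    unfolding K_def s_def by auto
  moreover have "juveniles t = exp (- del0 * t) * integral {s..t} births_scaled"
    unfolding juveniles_def s_def[symmetric] using births_scaled_integral_diff[of s t] s t by auto
  ultimately have "\<bar>juveniles t\<bar> \<le> exp (- del0 * t) * (exp (del0 * t) * (K * Z_envelope s) * (t - s))"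
    by (simp add: abs_mult)
  also have "\<dots> = K * Z_envelope s * (t - s)" by (simp add: mult_exp_exp flip: mult.assoc exp_add)
  also have "\<dots> \<le> K * (Z_envelope t * exp (\<alpha> * delay_max)) * delay_max"
    using Z_envelope_shift[of s t] s K Z_envelope_pos[of t] Z_envelope_pos[of s]
    by (intro mult_mono mult_left_mono) auto
  also have "\<dots> = C_I * Z_envelope t" unfolding C_I_def K_def by (simp add: algebra_simps)
  finally show ?thesis .
qed

subsection \<open>Decay of P and N\<close>

lemma N_deviation: "t \<in> {t0..b} \<Longrightarrow> N t - N1 = - (P t - P1) - (Z t + juveniles t)"
  using total_mass_const[of t] NT_eq unfolding total_mass_def by linarith

lemma Z_juveniles_bound: "t \<in> {t0..b} \<Longrightarrow> \<bar>Z t + juveniles t\<bar> \<le> (1 + C_I) * Z_envelope t"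
  using Z_decay[of t] juveniles_bound[of t] by (simp add: algebra_simps)

definition "P_envelope t = C_P * r * exp (- P_rate * (t - t0))"

lemma P_envelope_pos: "P_envelope t > 0"
  unfolding P_envelope_def using C_P_ge(1) C_I_nonneg r_pos by auto

lemma Z_envelope_le_P_envelope: "t \<ge> t0 \<Longrightarrow> Z_envelope t \<le> r * exp (- P_rate * (t - t0))"
  unfolding Z_envelope_def using P_rate_le(1) r_pos by (intro mult_left_mono) (auto simp: mult_right_mono)

lemma Z_juveniles_small: "t \<in> {t0..b} \<Longrightarrow> \<bar>Z t + juveniles t\<bar> \<le> P_envelope t / 2"
proof -
  assume t: "t \<in> {t0..b}"
  have "\<bar>Z t + juveniles t\<bar> \<le> (1 + C_I) * Z_envelope t" by (rule Z_juveniles_bound[OF t])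
  also have "\<dots> \<le> (1 + C_I) * (r * exp (- P_rate * (t - t0)))"
    using Z_envelope_le_P_envelope[of t] t C_I_nonneg by (intro mult_left_mono) auto
  also have "\<dots> \<le> (C_P / 2) * (r * exp (- P_rate * (t - t0)))"
    using C_P_ge(1) r_pos by (intro mult_right_mono) auto
  finally show ?thesis unfolding P_envelope_def by simp
qed

lemma grazing_small: "t \<in> {t0..b} \<Longrightarrow> \<bar>g * Z t * h (P t)\<bar> \<le> restoring_rate / 2 * P_envelope t"
proof -
  assume t: "t \<in> {t0..b}"
  then have tb: "t \<in> {0..b}" using t0_pos by auto
  have "\<bar>g * Z t * h (P t)\<bar> = g * h (P t) * \<bar>Z t\<bar>" using hP_nonneg[OF tb] g_pos by (simp add: abs_mult)
  also have "\<dots> \<le> g * h_hi * (r * exp (- P_rate * (t - t0)))"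
    using hP_hi[OF tb] hP_nonneg[OF tb] g_pos Z_decay[OF t] Z_envelope_le_P_envelope[of t] t
    by (intro mult_mono mult_left_mono) auto
  also have "\<dots> \<le> (restoring_rate / 2 * C_P) * (r * exp (- P_rate * (t - t0)))"
  proof -
    have "g * h_hi \<le> restoring_rate / 2 * C_P"
      using C_P_ge(2) restoring_rate_pos by (simp add: field_simps)
    then show ?thesis using r_pos by (intro mult_right_mono) auto
  qed
  finally show ?thesis unfolding P_envelope_def by (simp add: ac_simps)
qed

text \<open>Eliminating N by the conservation law, a deviation of P above (below) P1 pushes N below
  (above) N1, which decreases (increases) the net growth rate of P.\<close>
lemma P_growth_when_high:
  assumes t: "t \<in> {t0..b}" and high: "P t - P1 = P_envelope t"
  shows "P t * (mu * f (N t) - lam) \<le> - restoring_rate * P_envelope t"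
proof -
  define M where "M = mu * (c * (P_envelope t / 2))"
  have M: "M \<ge> 0" unfolding M_def using mu_pos c_pos P_envelope_pos[of t] by simp
  have tb: "t \<in> {0..b}" using t t0_pos by auto
  have N_le: "N t \<le> N1 - P_envelope t / 2"
    using N_deviation[OF t] abs_le_D2[OF Z_juveniles_small[OF t]] high by linarith
  have "N1 - \<eta> \<le> N t" using abs_le_D2[OF conjunct1[OF bspec[OF ball t]]] by linarith
  then have "c * (N1 - N t) \<le> f N1 - f (N t)"
    using N_le P_envelope_pos[of t] eta_pos by (intro slope[rule_format]) auto
  moreover have "c * (P_envelope t / 2) \<le> c * (N1 - N t)" using N_le c_pos by (intro mult_left_mono) auto
  ultimately have "mu * (f (N t) - f N1) \<le> mu * (- (c * (P_envelope t / 2)))"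
    using mu_pos by (intro mult_left_mono) auto
  then have q: "mu * f (N t) - lam \<le> - M"
    unfolding M_def using fN1 mu_pos by (simp add: right_diff_distrib)
  have "P t * (mu * f (N t) - lam) \<le> P t * (- M)" using q P_pos[OF tb] by (intro mult_left_mono) auto
  also have "\<dots> \<le> (P1 - \<eta>) * (- M)" using P_lo[OF tb] M by (intro mult_right_mono_neg) auto
  also have "\<dots> = - restoring_rate * P_envelope t" unfolding restoring_rate_def M_def by (simp add: algebra_simps)
  finally show ?thesis .
qed

lemma P_growth_when_low:
  assumes t: "t \<in> {t0..b}" and low: "- (P t - P1) = P_envelope t"
  shows "restoring_rate * P_envelope t \<le> P t * (mu * f (N t) - lam)"
proof -
  define M where "M = mu * (c * (P_envelope t / 2))"
  have M: "M \<ge> 0" unfolding M_def using mu_pos c_pos P_envelope_pos[of t] by simp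
  have tb: "t \<in> {0..b}" using t t0_pos by auto
  have N_ge: "N1 + P_envelope t / 2 \<le> N t"
    using N_deviation[OF t] abs_le_D1[OF Z_juveniles_small[OF t]] low by linarith
  have "N t \<le> N1 + \<eta>" using abs_le_D1[OF conjunct1[OF bspec[OF ball t]]] by linarith
  then have "c * (N t - N1) \<le> f (N t) - f N1"
    using N_ge P_envelope_pos[of t] eta_pos by (intro slope[rule_format]) auto
  moreover have "c * (P_envelope t / 2) \<le> c * (N t - N1)" using N_ge c_pos by (intro mult_left_mono) auto
  ultimately have "mu * (c * (P_envelope t / 2)) \<le> mu * (f (N t) - f N1)"
    using mu_pos by (intro mult_left_mono) auto
  then have q: "M \<le> mu * f (N t) - lam"
    unfolding M_def using fN1 mu_pos by (simp add: right_diff_distrib)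
  have "restoring_rate * P_envelope t = (P1 - \<eta>) * M"
    unfolding restoring_rate_def M_def by (simp add: algebra_simps)
  also have "\<dots> \<le> P t * M" using P_lo[OF tb] M by (intro mult_right_mono) auto
  also have "\<dots> \<le> P t * (mu * f (N t) - lam)" using q P_pos[OF tb] by (intro mult_left_mono) auto
  finally show ?thesis .
qed

lemma P_envelope_der: "(P_envelope has_real_derivative - P_rate * P_envelope t) (at t within {t0..})"
  unfolding P_envelope_def by (auto intro!: derivative_eq_intros)

lemma P_deviation_der: "t \<ge> t0 \<Longrightarrow> ((\<lambda>u. P u - P1) has_real_derivative
    P t * (mu * f (N t) - lam) - g * Z t * h (P t)) (at t within {t0..})"
  using DERIV_diff[OF P_der_sol DERIV_const, of t P1] by (simp add: algebra_simps)

lemma P_decay: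
  assumes t: "t \<in> {t0..b}"
  shows "\<bar>P t - P1\<bar> < P_envelope t"
proof -
  note key = P_barrier_margin[OF P_envelope_pos]
  have upper: "\<exists>d<0. ((\<lambda>u. (P u - P1) - P_envelope u) has_real_derivative d) (at ts within {t0..})"
    if ts: "ts \<in> {t0<..b}" "P ts - P1 = P_envelope ts" "\<forall>u\<in>{t0..<ts}. \<bar>P u - P1\<bar> < P_envelope u" for ts
  proof -
    have tsb: "ts \<in> {t0..b}" using ts(1) by auto
    have "((\<lambda>u. (P u - P1) - P_envelope u) has_real_derivative
        (P ts * (mu * f (N ts) - lam) - g * Z ts * h (P ts)) - (- P_rate * P_envelope ts)) (at ts within {t0..})"
      using tsb by (intro DERIV_diff P_deviation_der P_envelope_der) auto
    moreover have "(P ts * (mu * f (N ts) - lam) - g * Z ts * h (P ts)) - (- P_rate * P_envelope ts) < 0"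
      using key[of ts] P_growth_when_high[OF tsb ts(2)] grazing_small[OF tsb] by (simp add: abs_le_iff)
    ultimately show ?thesis by blast
  qed
  have lower: "\<exists>d<0. ((\<lambda>u. - (P u - P1) - P_envelope u) has_real_derivative d) (at ts within {t0..})"
    if ts: "ts \<in> {t0<..b}" "- (P ts - P1) = P_envelope ts" "\<forall>u\<in>{t0..<ts}. \<bar>P u - P1\<bar> < P_envelope u" for ts
  proof -
    have tsb: "ts \<in> {t0..b}" using ts(1) by auto
    have "((\<lambda>u. - (P u - P1) - P_envelope u) has_real_derivative
        - (P ts * (mu * f (N ts) - lam) - g * Z ts * h (P ts)) - (- P_rate * P_envelope ts)) (at ts within {t0..})"
      using tsb by (intro DERIV_diff DERIV_minus P_deviation_der P_envelope_der) auto
    moreover have "- (P ts * (mu * f (N ts) - lam) - g * Z ts * h (P ts)) - (- P_rate * P_envelope ts) < 0"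
      using key[of ts] P_growth_when_low[OF tsb ts(2)] grazing_small[OF tsb] by (simp add: abs_le_iff)
    ultimately show ?thesis by blast
  qed
  have sub: "{t0..b} \<subseteq> {0..b}" using t0_pos by auto
  have "continuous_on {t0..b} (\<lambda>u. P u - P1)"
    using continuous_on_subset[OF P_cont sub] by (intro continuous_intros)
  moreover have "continuous_on {t0..b} P_envelope" unfolding P_envelope_def[abs_def] by (intro continuous_intros)
  moreover have "\<bar>P t0 - P1\<bar> < P_envelope t0"
  proof -
    have "\<bar>P t0 - P1\<bar> < r" using init initial_segment[of t0] t0_pos by auto
    moreover have "r \<le> C_P * r" using C_P_ge(1) C_I_nonneg r_pos by auto
    ultimately show ?thesis unfolding P_envelope_def by simp
  qed
  ultimately show ?thesis
    using abs_below_barrier[of t0 b "\<lambda>u. P u - P1" P_envelope, OF _ _ _ upper lower t] by blast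
qed

lemma N_decay: "t \<in> {t0..b} \<Longrightarrow> \<bar>N t - N1\<bar> < (C_P + 1 + C_I) * r * exp (- P_rate * (t - t0))"
proof -
  assume t: "t \<in> {t0..b}"
  have "\<bar>Z t + juveniles t\<bar> \<le> (1 + C_I) * Z_envelope t" by (rule Z_juveniles_bound[OF t])
  also have "\<dots> \<le> (1 + C_I) * (r * exp (- P_rate * (t - t0)))"
    using Z_envelope_le_P_envelope[of t] t C_I_nonneg by (intro mult_left_mono) auto
  finally have "\<bar>Z t + juveniles t\<bar> \<le> (1 + C_I) * (r * exp (- P_rate * (t - t0)))" .
  then have "\<bar>N t - N1\<bar> < P_envelope t + (1 + C_I) * (r * exp (- P_rate * (t - t0)))"
    using N_deviation[OF t] P_decay[OF t] by linarith
  then show ?thesis unfolding P_envelope_def by (simp add: algebra_simps)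
qed

end

context tde_neighbourhood
begin

subsection \<open>Removing the a priori assumption\<close>

lemma trajectory_rates:
  assumes inD: "in_D g gam del0 m NT t0 h R \<phi>1 \<phi>2 \<phi>3"
    and sol: "tde_solution mu lam g gam del del0 m NT f h R t0 \<phi>1 \<phi>2 \<phi>3 N P Z"
    and init: "\<forall>t\<in>{-t0..0}. \<bar>\<phi>1 t - N1\<bar> < init_radius \<and> \<bar>\<phi>2 t - P1\<bar> < init_radius \<and> \<bar>\<phi>3 t\<bar> < init_radius"
    and ball: "\<forall>t\<in>{t0..b}. \<bar>N t - N1\<bar> \<le> \<eta> \<and> \<bar>P t - P1\<bar> \<le> \<eta> \<and> \<bar>Z t\<bar> \<le> \<eta>"
    and t: "t \<in> {t0..b}"
  shows "\<bar>Z t\<bar> < init_radius * exp (- \<alpha> * (t - t0)) \<and>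
         \<bar>P t - P1\<bar> < C_P * init_radius * exp (- P_rate * (t - t0)) \<and>
         \<bar>N t - N1\<bar> < (C_P + 1 + C_I) * init_radius * exp (- P_rate * (t - t0))"
proof -
  interpret trajectory: tde_trajectory mu lam g gam del del0 m NT f h R f' N1 P1 \<eta> \<alpha> c t0 init_radius b
      \<phi>1 \<phi>2 \<phi>3 N P Z
    by (rule tde_trajectory.intro[OF tde_neighbourhood_axioms], unfold_locales)
       (use inD sol init ball t init_radius_pos init_radius_le eta_pos in auto)
  show ?thesis using trajectory.Z_decay[OF t] trajectory.P_decay[OF t] trajectory.N_decay[OF t]
    unfolding trajectory.Z_envelope_def trajectory.P_envelope_def by auto
qed

lemma rates_imp_half_ball:
  assumes "t0 \<le> t"
    and rates: "\<bar>Z t\<bar> < init_radius * exp (- \<alpha> * (t - t0))"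
      "\<bar>P t - P1\<bar> < C_P * init_radius * exp (- P_rate * (t - t0))"
      "\<bar>N t - N1\<bar> < (C_P + 1 + C_I) * init_radius * exp (- P_rate * (t - t0))"
  shows "\<bar>N t - N1\<bar> < \<eta> / 2 \<and> \<bar>P t - P1\<bar> < \<eta> / 2 \<and> \<bar>Z t\<bar> < \<eta> / 2"
proof -
  have e: "exp (- \<alpha> * (t - t0)) \<le> 1" "exp (- P_rate * (t - t0)) \<le> 1"
    using assms(1) alpha_pos P_rate_pos by (auto simp: mult_nonneg_nonneg)
  have r: "init_radius > 0" "C_total * init_radius = \<eta> / 2"
    using init_radius_pos C_total_ge unfolding init_radius_def by auto
  have "init_radius * exp (- \<alpha> * (t - t0)) \<le> init_radius" using e r by (simp add: mult_left_le)
  moreover have "C_P * init_radius * exp (- P_rate * (t - t0)) \<le> C_P * init_radius"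
    using e r C_P_ge C_I_nonneg by (intro mult_left_le) auto
  moreover have "(C_P + 1 + C_I) * init_radius * exp (- P_rate * (t - t0)) \<le> (C_P + 1 + C_I) * init_radius"
    using e r C_P_ge C_I_nonneg by (intro mult_left_le) auto
  moreover have "init_radius \<le> C_total * init_radius" "C_P * init_radius \<le> C_total * init_radius"
    "(C_P + 1 + C_I) * init_radius \<le> C_total * init_radius"
    unfolding C_total_def using r C_I_nonneg C_P_ge by (auto intro: mult_right_mono)
  ultimately show ?thesis using rates r by linarith
qed

definition "deviation N P Z t = max \<bar>N t - N1\<bar> (max \<bar>P t - P1\<bar> \<bar>Z t\<bar>)"

text \<open>The a priori rates keep the solution in the \<open>\<eta>/2\<close>-neighbourhood as long as it stays
  in the \<open>\<eta>\<close>-neighbourhood, so by continuation it never leaves.\<close>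
lemma solution_rates:
  assumes inD: "in_D g gam del0 m NT t0 h R \<phi>1 \<phi>2 \<phi>3"
    and sol: "tde_solution mu lam g gam del del0 m NT f h R t0 \<phi>1 \<phi>2 \<phi>3 N P Z"
    and init: "\<forall>t\<in>{-t0..0}. \<bar>\<phi>1 t - N1\<bar> < init_radius \<and> \<bar>\<phi>2 t - P1\<bar> < init_radius \<and> \<bar>\<phi>3 t\<bar> < init_radius"
    and t: "t0 \<le> t"
  shows "\<bar>Z t\<bar> < init_radius * exp (- \<alpha> * (t - t0)) \<and>
         \<bar>P t - P1\<bar> < C_P * init_radius * exp (- P_rate * (t - t0)) \<and>
         \<bar>N t - N1\<bar> < (C_P + 1 + C_I) * init_radius * exp (- P_rate * (t - t0))"
proof -
  have rates: "\<bar>Z u\<bar> < init_radius * exp (- \<alpha> * (u - t0)) \<and>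
         \<bar>P u - P1\<bar> < C_P * init_radius * exp (- P_rate * (u - t0)) \<and>
         \<bar>N u - N1\<bar> < (C_P + 1 + C_I) * init_radius * exp (- P_rate * (u - t0))"
    if "\<forall>u\<in>{t0..b}. deviation N P Z u \<le> \<eta>" "u \<in> {t0..b}" for b u
    using trajectory_rates[OF inD sol init _ that(2)] that(1) unfolding deviation_def by auto
  have inside: "deviation N P Z u < \<eta>" if "t0 \<le> u" for u
  proof (rule stays_below_by_continuation[OF _ _ _ that])
    show "continuous_on {t0..b} (deviation N P Z)" for b
      using tde_solution_continuous_on[OF sol] unfolding deviation_def[abs_def]
      by (auto intro!: continuous_intros)
    have "t0 > 0" using inD unfolding in_D_def by auto
    then have "N t0 = \<phi>1 0" "P t0 = \<phi>2 0" "Z t0 = \<phi>3 0"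
      using sol unfolding tde_solution_def by (metis add_0_right atLeastAtMost_iff neg_le_0_iff_le order_refl less_imp_le)+
    moreover have "\<bar>\<phi>1 0 - N1\<bar> < init_radius \<and> \<bar>\<phi>2 0 - P1\<bar> < init_radius \<and> \<bar>\<phi>3 0\<bar> < init_radius"
      using init \<open>t0 > 0\<close> by auto
    ultimately show "deviation N P Z t0 < \<eta>"
      using init_radius_le eta_pos unfolding deviation_def by auto
    fix b s assume dev: "\<forall>u\<in>{t0..b}. deviation N P Z u \<le> \<eta>" and s: "s \<in> {t0..b}"
    then have "t0 \<le> s" by simp
    then have "\<bar>N s - N1\<bar> < \<eta> / 2 \<and> \<bar>P s - P1\<bar> < \<eta> / 2 \<and> \<bar>Z s\<bar> < \<eta> / 2"
      using rates_imp_half_ball rates[OF dev s] by blast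
    then show "deviation N P Z s < \<eta>" unfolding deviation_def using eta_pos by auto
  qed
  then have "\<forall>u\<in>{t0..t}. deviation N P Z u \<le> \<eta>" by (simp add: less_imp_le)
  then show ?thesis using rates[of t t] t by simp
qed

lemma asymptotic_stability:
  assumes "\<eta> \<le> \<epsilon> / 2"
  shows "\<exists>r>0. \<forall>t0 \<phi>1 \<phi>2 \<phi>3 N P Z.
            in_D g gam del0 m NT t0 h R \<phi>1 \<phi>2 \<phi>3 \<and>
            (\<forall>t\<in>{-t0..0}. dist (\<phi>1 t, \<phi>2 t, \<phi>3 t) (N1, P1, 0) < r) \<and>
            tde_solution mu lam g gam del del0 m NT f h R t0 \<phi>1 \<phi>2 \<phi>3 N P Z
            \<longrightarrow> (\<forall>t\<ge>t0. dist (N t, P t, Z t) (N1, P1, 0) < \<epsilon>) \<and>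
                ((\<lambda>t. (N t, P t, Z t)) \<longlongrightarrow> (N1, P1, 0)) at_top"
proof (intro exI[of _ init_radius] conjI[OF init_radius_pos] allI impI)
  fix t0 \<phi>1 \<phi>2 \<phi>3 N P Z
  assume H: "in_D g gam del0 m NT t0 h R \<phi>1 \<phi>2 \<phi>3 \<and>
    (\<forall>t\<in>{-t0..0}. dist (\<phi>1 t, \<phi>2 t, \<phi>3 t) (N1, P1, 0) < init_radius) \<and>
    tde_solution mu lam g gam del del0 m NT f h R t0 \<phi>1 \<phi>2 \<phi>3 N P Z"
  then have inD: "in_D g gam del0 m NT t0 h R \<phi>1 \<phi>2 \<phi>3"
    and sol: "tde_solution mu lam g gam del del0 m NT f h R t0 \<phi>1 \<phi>2 \<phi>3 N P Z" by auto
  have "\<forall>t\<in>{-t0..0}. \<bar>\<phi>1 t - N1\<bar> < init_radius \<and> \<bar>\<phi>2 t - P1\<bar> < init_radius \<and> \<bar>\<phi>3 t\<bar> < init_radius"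
  proof
    fix t assume "t \<in> {-t0..0}"
    then have "dist (\<phi>1 t, \<phi>2 t, \<phi>3 t) (N1, P1, 0) < init_radius" using H by blast
    from abs_less_of_dist_triple_less[OF this]
    show "\<bar>\<phi>1 t - N1\<bar> < init_radius \<and> \<bar>\<phi>2 t - P1\<bar> < init_radius \<and> \<bar>\<phi>3 t\<bar> < init_radius" by simp
  qed
  note rates = solution_rates[OF inD sol this]
  have "\<forall>t\<ge>t0. dist (N t, P t, Z t) (N1, P1, 0) < \<epsilon>"
  proof (intro allI impI)
    fix t assume "t \<ge> t0"
    have "\<bar>N t - N1\<bar> < \<eta> / 2 \<and> \<bar>P t - P1\<bar> < \<eta> / 2 \<and> \<bar>Z t\<bar> < \<eta> / 2"
      using rates_imp_half_ball[OF \<open>t \<ge> t0\<close>] rates[OF \<open>t \<ge> t0\<close>] by blast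
    then show "dist (N t, P t, Z t) (N1, P1, 0) < \<epsilon>"
      using dist_triple_le_sum_abs[of "N t" "P t" "Z t" N1 P1 0] assms eta_pos by (elim conjE) simp
  qed
  have "(N \<longlongrightarrow> N1) at_top"
    by (rule tendsto_of_exp_decay_bound[OF P_rate_pos, of t0 N N1 "(C_P + 1 + C_I) * init_radius"])
      (use rates in \<open>auto intro: less_imp_le\<close>)
  moreover have "(P \<longlongrightarrow> P1) at_top"
    by (rule tendsto_of_exp_decay_bound[OF P_rate_pos, of t0 P P1 "C_P * init_radius"])
      (use rates in \<open>auto intro: less_imp_le\<close>)
  moreover have "(Z \<longlongrightarrow> 0) at_top"
    by (rule tendsto_of_exp_decay_bound[OF alpha_pos, of t0 Z 0 init_radius])
      (use rates in \<open>auto intro: less_imp_le\<close>)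
  ultimately have "((\<lambda>t. (N t, P t, Z t)) \<longlongrightarrow> (N1, P1, 0)) at_top" by (intro tendsto_Pair)
  with \<open>\<forall>t\<ge>t0. dist (N t, P t, Z t) (N1, P1, 0) < \<epsilon>\<close>
  show "(\<forall>t\<ge>t0. dist (N t, P t, Z t) (N1, P1, 0) < \<epsilon>) \<and> ((\<lambda>t. (N t, P t, Z t)) \<longlongrightarrow> (N1, P1, 0)) at_top"
    by blast
qed

end

context tde_setting
begin

text \<open>As \<open>\<eta> \<rightarrow> 0\<close> the bound on the coefficient of the delayed term tends to
  \<open>recruitment_rate P1 < \<delta>\<close>.\<close>
lemma feedback_bound_below_del:
  "\<exists>b0>0. \<forall>\<eta>>0. \<eta> < b0 \<longrightarrow> R (P1 + \<eta>) / R (P1 - \<eta>) * recruitment_rate gam g del0 m R h (P1 + \<eta>) < del"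
proof -
  have P1i: "P1 \<in> interior {0..}" using P1_pos by simp
  have cR: "isCont R P1" by (rule continuous_on_interior[OF R_cont P1i])
  have ch: "isCont h P1" by (rule continuous_on_interior[OF h_cont P1i])
  have l1: "((\<lambda>\<eta>. P1 + \<eta>) \<longlongrightarrow> P1) (at_right 0)"
    using tendsto_add[OF tendsto_const[of P1] tendsto_ident_at[of 0 "{0<..}"]] by simp
  have l2: "((\<lambda>\<eta>. P1 - \<eta>) \<longlongrightarrow> P1) (at_right 0)"
    using tendsto_diff[OF tendsto_const[of P1] tendsto_ident_at[of 0 "{0<..}"]] by simp
  have lR1: "((\<lambda>\<eta>. R (P1 + \<eta>)) \<longlongrightarrow> R P1) (at_right 0)" by (rule isCont_tendsto_compose[OF cR l1])
  have lR2: "((\<lambda>\<eta>. R (P1 - \<eta>)) \<longlongrightarrow> R P1) (at_right 0)" by (rule isCont_tendsto_compose[OF cR l2])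
  have lh: "((\<lambda>\<eta>. h (P1 + \<eta>)) \<longlongrightarrow> h P1) (at_right 0)" by (rule isCont_tendsto_compose[OF ch l1])
  have RP1: "R P1 > 0" using R_pos P1_pos by simp
  have "((\<lambda>\<eta>. R (P1 + \<eta>) / R (P1 - \<eta>) * (gam * g * exp (- del0 * m / R (P1 + \<eta>)) * h (P1 + \<eta>)))
      \<longlongrightarrow> R P1 / R P1 * (gam * g * exp (- del0 * m / R P1) * h P1)) (at_right 0)"
    using RP1 by (intro tendsto_intros lR1 lR2 lh) auto
  then have "((\<lambda>\<eta>. R (P1 + \<eta>) / R (P1 - \<eta>) * recruitment_rate gam g del0 m R h (P1 + \<eta>))
      \<longlongrightarrow> recruitment_rate gam g del0 m R h P1) (at_right 0)"
    using RP1 unfolding recruitment_rate_def by simp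
  then have "eventually (\<lambda>\<eta>. R (P1 + \<eta>) / R (P1 - \<eta>) * recruitment_rate gam g del0 m R h (P1 + \<eta>) < del)
      (at_right 0)"
    using recruitment_P1 by (rule order_tendstoD(2))
  then show ?thesis unfolding eventually_at_right_field by auto
qed

lemma exists_neighbourhood:
  assumes "\<epsilon> > 0"
  shows "\<exists>\<eta> \<alpha> c. tde_neighbourhood mu lam g gam del del0 m NT f h R f' N1 P1 \<eta> \<alpha> c \<and> \<eta> \<le> \<epsilon> / 2"
proof -
  obtain b0 where b0: "b0 > 0"
    "\<forall>\<eta>>0. \<eta> < b0 \<longrightarrow> R (P1 + \<eta>) / R (P1 - \<eta>) * recruitment_rate gam g del0 m R h (P1 + \<eta>) < del"
    using feedback_bound_below_del by blast
  define \<eta> where "\<eta> = min (b0 / 2) (min (P1 / 4) (min (N1 / 4) (\<epsilon> / 2)))"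
  have eta: "\<eta> > 0" "\<eta> < b0" "\<eta> < P1 / 2" "\<eta> \<le> N1 / 4" "\<eta> \<le> \<epsilon> / 2"
    unfolding \<eta>_def using b0 P1_pos N1_pos assms by auto
  have "R (P1 + \<eta>) / R (P1 - \<eta>) * recruitment_rate gam g del0 m R h (P1 + \<eta>) < del"
    using b0 eta by auto
  then obtain \<alpha> where \<alpha>: "\<alpha> > 0" "\<alpha> + R (P1 + \<eta>) / R (P1 - \<eta>) * recruitment_rate gam g del0 m R h (P1 + \<eta>)
      * exp (\<alpha> * (m / R (P1 - \<eta>))) < del"
    using exists_pos_rate_below by blast
  obtain c where c: "c > 0" "\<forall>y z. N1 - \<eta> \<le> y \<longrightarrow> y \<le> z \<longrightarrow> z \<le> N1 + \<eta> \<longrightarrow> c * (z - y) \<le> f z - f y"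
    using pos_continuous_derivative_imp_uniform_slope[OF f_der f'_cont f'_pos, of "N1 - \<eta>" "N1 + \<eta>"] eta
    by auto
  have "tde_neighbourhood mu lam g gam del del0 m NT f h R f' N1 P1 \<eta> \<alpha> c"
    by (rule tde_neighbourhood.intro[OF tde_setting_axioms], unfold_locales) (use eta \<alpha> c in auto)
  then show ?thesis using eta by blast
qed

theorem E1_asymptotically_stable:
  "\<forall>\<epsilon>>0. \<exists>r>0. \<forall>t0 \<phi>1 \<phi>2 \<phi>3 N P Z.
      in_D g gam del0 m NT t0 h R \<phi>1 \<phi>2 \<phi>3 \<and>
      (\<forall>t\<in>{-t0..0}. dist (\<phi>1 t, \<phi>2 t, \<phi>3 t) (N1, P1, 0) < r) \<and>
      tde_solution mu lam g gam del del0 m NT f h R t0 \<phi>1 \<phi>2 \<phi>3 N P Z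
      \<longrightarrow> (\<forall>t\<ge>t0. dist (N t, P t, Z t) (N1, P1, 0) < \<epsilon>) \<and>
          ((\<lambda>t. (N t, P t, Z t)) \<longlongrightarrow> (N1, P1, 0)) at_top"
proof (intro allI impI)
  fix \<epsilon> :: real assume "\<epsilon> > 0"
  then obtain \<eta> \<alpha> c where "tde_neighbourhood mu lam g gam del del0 m NT f h R f' N1 P1 \<eta> \<alpha> c"
    and "\<eta> \<le> \<epsilon> / 2" using exists_neighbourhood by blast
  then show "\<exists>r>0. \<forall>t0 \<phi>1 \<phi>2 \<phi>3 N P Z.
      in_D g gam del0 m NT t0 h R \<phi>1 \<phi>2 \<phi>3 \<and>
      (\<forall>t\<in>{-t0..0}. dist (\<phi>1 t, \<phi>2 t, \<phi>3 t) (N1, P1, 0) < r) \<and>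
      tde_solution mu lam g gam del del0 m NT f h R t0 \<phi>1 \<phi>2 \<phi>3 N P Z
      \<longrightarrow> (\<forall>t\<ge>t0. dist (N t, P t, Z t) (N1, P1, 0) < \<epsilon>) \<and>
          ((\<lambda>t. (N t, P t, Z t)) \<longlongrightarrow> (N1, P1, 0)) at_top"
    by (rule tde_neighbourhood.asymptotic_stability)
qed

end

section \<open>The equilibria\<close>

lemma pos_if_nondecreasing_with_pos_start_slope:
  fixes R R' :: "real \<Rightarrow> real"
  assumes der: "\<forall>x\<ge>0. (R has_real_derivative R' x) (at x within {0..})"
    and nonneg: "\<forall>x\<ge>0. R x \<ge> 0" and mono: "\<And>x y. 0 \<le> x \<Longrightarrow> x \<le> y \<Longrightarrow> R x \<le> R y"
    and start: "R 0 = 0 \<longrightarrow> R' 0 > 0" and x: "x > 0"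
  shows "R x > 0"
proof (cases "R 0 > 0")
  case True
  then show ?thesis using mono[of 0 x] x by auto
next
  case False
  then have R0: "R 0 = 0" using nonneg by force
  then have "R' 0 > 0" using start by simp
  then obtain d where d: "d > 0" "\<forall>h>0. 0 + h \<in> {0..} \<longrightarrow> h < d \<longrightarrow> R 0 < R (0 + h)"
    using has_real_derivative_pos_inc_right[OF der[rule_format, of 0]] by auto
  define y where "y = min x (d / 2)"
  have y: "y > 0" "y < d" "y \<le> x" unfolding y_def using d x by auto
  have "R 0 < R y" using d y by auto
  moreover have "R y \<le> R x" using mono[of y x] y by auto
  ultimately show ?thesis using R0 by simp
qed

lemma ex1_N_equilibrium:
  fixes f f' :: "real \<Rightarrow> real"
  assumes der: "\<forall>x\<ge>0. (f has_real_derivative f' x) (at x within {0..})" and pos: "\<forall>x\<ge>0. f' x > 0"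
    and f0: "f 0 = 0" and lim: "(f \<longlongrightarrow> 1) at_top" and v: "0 < v" "v < 1"
  shows "\<exists>!x. x \<ge> 0 \<and> f x = v"
proof -
  obtain X where X: "\<forall>x\<ge>X. f x > v"
    using order_tendstoD(1)[OF lim v(2)] unfolding eventually_at_top_linorder by auto
  have "\<exists>!x. x \<in> {0..} \<and> f x = v"
  proof (rule ex1_level_of_strict_increasing)
    show "continuous_on {0..} f" by (rule continuous_on_atLeast_if_has_real_derivative[OF der])
    show "f x < f y" if "x \<in> {0..}" "y \<in> {0..}" "x < y" for x y
      using pos_derivative_imp_strict_increasing[OF der pos] that by simp
    show "f 0 \<le> v" using f0 v by simp
    show "v \<le> f (max X 0)" using X by (simp add: less_imp_le)
    show "is_interval ({0..} :: real set)" by (simp add: is_interval_1)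
  qed simp_all
  then show ?thesis by simp
qed

lemma recruitment_rate_strict_mono:
  assumes "gam * g > 0" "del0 \<ge> 0" "m > 0"
    and R_pos: "\<And>x. x > 0 \<Longrightarrow> R x > 0" and R_mono: "\<And>x y. 0 \<le> x \<Longrightarrow> x \<le> y \<Longrightarrow> R x \<le> R y"
    and h_mono: "\<And>x y. 0 \<le> x \<Longrightarrow> x < y \<Longrightarrow> h x < h y" and "h 0 = 0"
    and xy: "0 < x" "x < y"
  shows "recruitment_rate gam g del0 m R h x < recruitment_rate gam g del0 m R h y"
proof -
  have Rx: "R x > 0" "R x \<le> R y" using R_pos[of x] R_mono[of x y] xy by auto
  have "del0 * m / R y \<le> del0 * m / R x" using Rx assms(2,3) by (intro divide_left_mono) auto
  then have e: "exp (- del0 * m / R x) \<le> exp (- del0 * m / R y)" by simp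
  have hx: "h x \<ge> 0" "h x < h y" using h_mono[of 0 x] h_mono[of x y] \<open>h 0 = 0\<close> xy by auto
  have "exp (- del0 * m / R x) * h x \<le> exp (- del0 * m / R y) * h x" using e hx by (intro mult_right_mono) auto
  also have "\<dots> < exp (- del0 * m / R y) * h y" using hx by simp
  finally have "exp (- del0 * m / R x) * h x < exp (- del0 * m / R y) * h y" .
  then have "gam * g * (exp (- del0 * m / R x) * h x) < gam * g * (exp (- del0 * m / R y) * h y)"
    using assms(1) by (rule mult_strict_left_mono)
  then show ?thesis unfolding recruitment_rate_def by (simp add: mult.assoc)
qed

text \<open>The hypothesis on m is exactly what makes the limit of the recruitment rate at infinity
  exceed \<open>\<delta>\<close>.\<close>
lemma recruitment_rate_limit_gt:
  fixes gam g del del0 m Rinf :: real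
  assumes gg: "gam * g > del" and "del > 0" and Rinf: "Rinf > 0"
    and P2_exists: "del0 = 0 \<or> (del0 > 0 \<and> m < Rinf * ln (gam * g / del) / del0)"
  shows "gam * g * exp (- del0 * m / Rinf) > del"
proof (cases "del0 = 0")
  case True then show ?thesis using gg by simp
next
  case False
  then have d0: "del0 > 0" "m < Rinf * ln (gam * g / del) / del0" using P2_exists by auto
  have "m * del0 < Rinf * ln (gam * g / del)" using d0 by (simp add: pos_less_divide_eq)
  then have "del0 * m / Rinf < ln (gam * g / del)" using Rinf by (simp add: pos_divide_less_eq mult.commute)
  then have "exp (- (del0 * m / Rinf)) > exp (- ln (gam * g / del))" by simp
  moreover have "exp (- ln (gam * g / del)) = del / (gam * g)" using gg \<open>del > 0\<close> by (simp add: exp_minus)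
  ultimately have "exp (- del0 * m / Rinf) > del / (gam * g)" by simp
  then show ?thesis using gg \<open>del > 0\<close> by (simp add: pos_divide_less_eq mult.commute)
qed

lemma recruitment_rate_eventually_above:
  assumes "gam * g > del" "del > 0"
    and R_pos: "\<And>x. x > 0 \<Longrightarrow> R x > 0"
    and R_mono: "\<And>x y. 0 \<le> x \<Longrightarrow> x \<le> y \<Longrightarrow> R x \<le> R y" and R_lim: "(R \<longlongrightarrow> Rinf) at_top"
    and h_lim: "(h \<longlongrightarrow> 1) at_top"
    and P2_exists: "del0 = 0 \<or> (del0 > 0 \<and> m < Rinf * ln (gam * g / del) / del0)"
  shows "\<exists>X. \<forall>x\<ge>X. del < recruitment_rate gam g del0 m R h x"
proof -
  have Rinf: "Rinf > 0"
  proof -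
    have "R 1 \<le> Rinf"
      by (rule tendsto_lowerbound[OF R_lim]) (use R_mono in \<open>auto simp: eventually_at_top_linorder intro!: exI[of _ 1]\<close>)
    then show ?thesis using R_pos[of 1] by simp
  qed
  have "(recruitment_rate gam g del0 m R h \<longlongrightarrow> gam * g * exp (- del0 * m / Rinf) * 1) at_top"
    unfolding recruitment_rate_def[abs_def] using Rinf by (intro tendsto_intros R_lim h_lim) auto
  moreover have "del < gam * g * exp (- del0 * m / Rinf) * 1"
    using recruitment_rate_limit_gt[OF assms(1,2) Rinf P2_exists] by simp
  ultimately have "eventually (\<lambda>x. del < recruitment_rate gam g del0 m R h x) at_top"
    by (rule order_tendstoD(1))
  then show ?thesis unfolding eventually_at_top_linorder by blast
qed

lemma recruitment_rate_below_near_zero: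
  assumes "gam * g > 0" "del > 0" "del0 \<ge> 0" "m > 0" and R_pos: "\<And>x. x > 0 \<Longrightarrow> R x > 0"
    and h_cont: "continuous_on {0..} h" and h_mono: "\<And>x y. 0 \<le> x \<Longrightarrow> x < y \<Longrightarrow> h x < h y"
    and h0: "h 0 = 0"
  shows "\<exists>p>0. recruitment_rate gam g del0 m R h p < del"
proof -
  have "(h \<longlongrightarrow> h 0) (at 0 within {0..})" using h_cont unfolding continuous_on_def by auto
  then have "(h \<longlongrightarrow> 0) (at_right 0)" using h0 by (auto intro: tendsto_within_subset)
  then have "((\<lambda>p. gam * g * h p) \<longlongrightarrow> gam * g * 0) (at_right 0)" by (intro tendsto_intros)
  then have "eventually (\<lambda>p. gam * g * h p < del) (at_right 0)" using assms(2) by (intro order_tendstoD(2)) auto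
  then obtain b where b: "b > 0" "\<forall>y>0. y < b \<longrightarrow> gam * g * h y < del"
    unfolding eventually_at_right_field by auto
  define p where "p = b / 2"
  have p: "p > 0" "gam * g * h p < del" unfolding p_def using b by auto
  have "recruitment_rate gam g del0 m R h p \<le> gam * g * 1 * h p"
    unfolding recruitment_rate_def using assms(1,3,4) h_mono[of 0 p] h0 p R_pos[of p]
    by (intro mult_right_mono mult_left_mono) auto
  then show ?thesis using p by (intro exI[of _ p]) simp
qed

lemma ex1_P_equilibrium:
  assumes "gam * g > del" "del > 0" "del0 \<ge> 0" "m > 0"
    and R_cont: "continuous_on {0..} R" and R_pos: "\<And>x. x > 0 \<Longrightarrow> R x > 0"
    and R_mono: "\<And>x y. 0 \<le> x \<Longrightarrow> x \<le> y \<Longrightarrow> R x \<le> R y" and R_lim: "(R \<longlongrightarrow> Rinf) at_top"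
    and h_cont: "continuous_on {0..} h" and h_mono: "\<And>x y. 0 \<le> x \<Longrightarrow> x < y \<Longrightarrow> h x < h y"
    and h0: "h 0 = 0" and h_lim: "(h \<longlongrightarrow> 1) at_top"
    and P2_exists: "del0 = 0 \<or> (del0 > 0 \<and> m < Rinf * ln (gam * g / del) / del0)"
  shows "\<exists>!p. p > 0 \<and> recruitment_rate gam g del0 m R h p = del"
proof -
  let ?q = "recruitment_rate gam g del0 m R h"
  have gg: "gam * g > 0" using assms(1,2) by simp
  have "\<exists>X. \<forall>x\<ge>X. del < ?q x"
    by (rule recruitment_rate_eventually_above) (fact assms(1,2) R_pos R_mono R_lim h_lim P2_exists)+
  then obtain X where X: "\<forall>x\<ge>X. del < ?q x" by blast
  have "\<exists>p>0. ?q p < del"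
    by (rule recruitment_rate_below_near_zero) (fact gg assms(2-4) R_pos h_cont h_mono h0)+
  then obtain p0 where p0: "p0 > 0" "?q p0 < del" by blast
  have cq: "continuous_on {0<..} ?q"
  proof -
    have sub: "{0<..} \<subseteq> {0::real..}" by auto
    have "continuous_on {0<..} R" "continuous_on {0<..} h"
      using continuous_on_subset[OF R_cont sub] continuous_on_subset[OF h_cont sub] by auto
    moreover have "\<forall>x\<in>{0<..}. R x \<noteq> 0" using R_pos by force
    ultimately show ?thesis unfolding recruitment_rate_def[abs_def] by (auto intro!: continuous_intros)
  qed
  have "\<exists>!p. p \<in> {0<..} \<and> ?q p = del"
  proof (rule ex1_level_of_strict_increasing[OF _ cq _ _ less_imp_le[OF p0(2)]])
    show "is_interval ({0<..} :: real set)" by (simp add: is_interval_1)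
    show "?q x < ?q y" if "x \<in> {0<..}" "y \<in> {0<..}" "x < y" for x y
      using recruitment_rate_strict_mono[of gam g del0 m R h, OF gg assms(3,4) R_pos R_mono h_mono h0] that by simp
    show "p0 \<in> {0<..}" using p0 by simp
    show "max X 1 \<in> {0<..}" by simp
    show "del \<le> ?q (max X 1)" using X by (simp add: less_imp_le)
  qed
  then show ?thesis by simp
qed

theorem proposition5:
  fixes mu lam g gam del del0 m NT :: real
    and f h R f' h' R' :: "real \<Rightarrow> real"
  assumes "mu > lam" "lam > 0" "g > 0" "gam > 0" "gam \<le> 1" "del > 0" "gam * g > del"
    "del0 \<ge> 0" "m > 0" "NT > 0"
    and f_C1: "\<forall>x\<ge>0. (f has_real_derivative f' x) (at x within {0..})" "continuous_on {0..} f'"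
    and f_props: "\<forall>x\<ge>0. f x \<ge> 0" "f 0 = 0" "\<forall>x\<ge>0. f' x > 0" "(f \<longlongrightarrow> 1) at_top"
    and h_C1: "\<forall>x\<ge>0. (h has_real_derivative h' x) (at x within {0..})" "continuous_on {0..} h'"
    and h_props: "\<forall>x\<ge>0. h x \<ge> 0" "h 0 = 0" "\<forall>x\<ge>0. h' x > 0" "(h \<longlongrightarrow> 1) at_top"
    and R_C1: "\<forall>x\<ge>0. (R has_real_derivative R' x) (at x within {0..})" "continuous_on {0..} R'"
    and R_props: "\<forall>x\<ge>0. R x \<ge> 0" "\<forall>x\<ge>0. R' x \<ge> 0" "R 0 = 0 \<longrightarrow> R' 0 > 0"
    and R_lim: "(R \<longlongrightarrow> Rinf) at_top"
    and P2_exists: "del0 = 0 \<or> (del0 > 0 \<and> m < Rinf * ln (gam * g / del) / del0)"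
  defines "NT1 \<equiv> THE x. x \<ge> 0 \<and> f x = lam / mu"
    and "P2 \<equiv> THE p. p > 0 \<and> gam * g * exp (- del0 * m / R p) * h p = del"
  defines "NT2 \<equiv> NT1 + P2"
    and "N1 \<equiv> NT1"
    and "P1 \<equiv> NT - NT1"
  assumes "NT1 < NT" "NT < NT2"
  shows "\<forall>\<epsilon>>0. \<exists>r>0. \<forall>t0 \<phi>1 \<phi>2 \<phi>3 N P Z.
            in_D g gam del0 m NT t0 h R \<phi>1 \<phi>2 \<phi>3 \<and>
            (\<forall>t\<in>{-t0..0}. dist (\<phi>1 t, \<phi>2 t, \<phi>3 t) (N1, P1, 0) < r) \<and>
            tde_solution mu lam g gam del del0 m NT f h R t0 \<phi>1 \<phi>2 \<phi>3 N P Z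
            \<longrightarrow> (\<forall>t\<ge>t0. dist (N t, P t, Z t) (N1, P1, 0) < \<epsilon>) \<and>
                ((\<lambda>t. (N t, P t, Z t)) \<longlongrightarrow> (N1, P1, 0)) at_top"
proof -
  note h_mono = pos_derivative_imp_strict_increasing[OF h_C1(1) h_props(3)]
  have R_mono: "R x \<le> R y" if "0 \<le> x" "x \<le> y" for x y
    using nonneg_derivative_imp_increasing[OF R_C1(1) R_props(2) that] .
  have R_pos: "R x > 0" if "x > 0" for x
    using pos_if_nondecreasing_with_pos_start_slope[OF R_C1(1) R_props(1) R_mono R_props(3) that] .
  note h_cont = continuous_on_atLeast_if_has_real_derivative[OF h_C1(1)]
  note R_cont = continuous_on_atLeast_if_has_real_derivative[OF R_C1(1)]
  have "0 < lam / mu" "lam / mu < 1" using assms(1,2) by (auto simp: field_simps)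
  then have NT1: "NT1 \<ge> 0" "f NT1 = lam / mu"
    using theI'[OF ex1_N_equilibrium[OF f_C1(1) f_props(3,2,4)]] unfolding NT1_def by auto
  have P2: "P2 > 0" "recruitment_rate gam g del0 m R h P2 = del"
    using theI'[OF ex1_P_equilibrium[OF assms(7,6,8,9) R_cont R_pos R_mono R_lim h_cont h_mono h_props(2,4) P2_exists]]
    unfolding P2_def recruitment_rate_def by auto
  have "P1 > 0" "P1 < P2" using assms(35,36) unfolding P1_def NT2_def by auto
  then have q_P1: "recruitment_rate gam g del0 m R h P1 < del"
    using recruitment_rate_strict_mono[of gam g del0 m R h, OF _ assms(8,9) R_pos R_mono h_mono h_props(2)] P2 assms(3,4)
    by fastforce
  have N1: "f N1 = lam / mu" "NT = N1 + P1" using NT1 unfolding N1_def P1_def by auto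
  have "N1 > 0" using NT1 f_props(2) \<open>0 < lam / mu\<close> unfolding N1_def by (cases "NT1 = 0") auto
  interpret tde_setting mu lam g gam del del0 m NT f h R f' N1 P1
    by unfold_locales (fact assms(1-4,6,8,9) f_C1 f_props(3) h_cont h_mono h_props(2) R_cont R_mono R_pos
        \<open>N1 > 0\<close> \<open>P1 > 0\<close> N1 q_P1)+
  show ?thesis by (rule E1_asymptotically_stable)
qed

end
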